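(* Let $\overline{\mathcal{O}}=\prod_{t}\overline{\mathcal{O}}_t$ (a finite product) be as in the context, with $\varphi:\overline{\mathcal{O}}\to\overline{\mathcal{O}}$ the digit-shift map and $\langle\cdot\rangle$ the componentwise fractional part. Let $K$ be any complete non-Archimedean field and let $\mathbf{\Gamma}:\overline{\mathcal{O}}\to K$ be a continuous non-vanishing function. Then a function $H:\overline{\mathcal{O}}\to K$ is continuous, non-vanishing, and satisfies, for all $n\in\mathbb{N}$ and all $\mathbf{x}=(\mathbf{x}_t)_t\in(\boldsymbol{\pi}^n-\mathbf{1})^{-1}\mathcal{O}$ such that for every $t$ one has $0\le \mathbf{x}_t<1$ if $\mathcal{O}_t=\mathbb{Z}$ and $|\mathbf{x}_t|<1$ if $\mathcal{O}_t=A$, $$\prod_{j=0}^{n-1}\mathbf{\Gamma}\left(\langle\boldsymbol{\pi}^j\mathbf{x}\rangle\right)=\prod_{j=0}^{n-1}H\left(\langle\boldsymbol{\pi}^j\mathbf{x}\rangle\right),$$ if and only if there exists a continuous non-vanishing function $G:\overline{\mathcal{O}}\to K$ such that $$H(\mathbf{x})=\mathbf{\Gamma}(\mathbf{x})\cdot\frac{G(\mathbf{x})}{G(-\varphi(-\mathbf{x}))}\quad\text{for all }\mathbf{x}\in\overline{\mathcal{O}}.$$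
   Context: Let $p$ be a prime, $q$ a power of $p$, $A=\mathbb{F}_q[\theta]$ and $k=\mathbb{F}_q(\theta)$, with the $\infty$-adic absolute value $|0|=0$, $|f/g|=q^{\deg f-\deg g}$ for nonzero $f,g\in A$. Let $\mathcal{O}=\prod_t\mathcal{O}_t$ be a direct product of finitely many rings, each $\mathcal{O}_t$ equal to $\mathbb{Z}$ or $A$. For each $t$ fix a finite prime: a prime number $p_t$ if $\mathcal{O}_t=\mathbb{Z}$ (then $\overline{\mathcal{O}}_t=\mathbb{Z}_{p_t}$), or a monic irreducible $v_t\in A$ if $\mathcal{O}_t=A$ (then $\overline{\mathcal{O}}_t=A_{v_t}$, the completion of $A$ at $v_t$); set $\overline{\mathcal{O}}=\prod_t\overline{\mathcal{O}}_t$. For each $t$ fix $\pi_t$ a positive power of the given uniformizer ($p_t$ or $v_t$), and put $\boldsymbol{\pi}=(\pi_t)_t$, $\mathbf{1}=(1,\dots,1)$. Every $\mathbf{x}_t\in\overline{\mathcal{O}}_t$ has a unique expansion $\mathbf{x}_t=\sum_{i\ge0}x_{t,i}\pi_t^i$ with $x_{t,i}$ an integer, $0\le x_{t,i}<\pi_t$, if $\mathcal{O}_t=\mathbb{Z}$, and $x_{t,i}\in A$ with $\deg x_{t,i}<\deg\pi_t$ if $\mathcal{O}_t=A$. Define $\varphi_t(\mathbf{x}_t)=\sum_{i\ge0}x_{t,i+1}\pi_t^i$ and $\varphi(\mathbf{x})=(\varphi_t(\mathbf{x}_t))_t$. Fractional parts: for $y\in\mathbb{Q}$, $\langle y\rangle$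 is the unique element of $\mathbb{Q}$ with $0\le\langle y\rangle<1$ and $y-\langle y\rangle\in\mathbb{Z}$; for $x\in k$, $\langle x\rangle$ is the unique element of $k$ with $|\langle x\rangle|<1$ and $x-\langle x\rangle\in A$; for $\mathbf{x}\in\prod_t\mathrm{Frac}(\mathcal{O}_t)$, $\langle\mathbf{x}\rangle=(\langle\mathbf{x}_t\rangle)_t$. Elements of $(\boldsymbol{\pi}^n-\mathbf{1})^{-1}\mathcal{O}$ and their fractional parts are regarded as elements of $\overline{\mathcal{O}}$ via the natural embeddings. *)

theory Defs
  imports "HOL-Computational_Algebra.Computational_Algebra"
begin

definition nonarch_complete_field :: "('k::field \<Rightarrow> real) \<Rightarrow> bool" where
  "nonarch_complete_field absv \<longleftrightarrow>
     (\<forall>x. 0 \<le> absv x) \<and>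
     (\<forall>x. absv x = 0 \<longleftrightarrow> x = 0) \<and>
     (\<forall>x y. absv (x * y) = absv x * absv y) \<and>
     (\<forall>x y. absv (x + y) \<le> max (absv x) (absv y)) \<and>
     (\<forall>s::nat \<Rightarrow> 'k.
        (\<forall>e>0. \<exists>N. \<forall>m\<ge>N. \<forall>n\<ge>N. absv (s m - s n) < e) \<longrightarrow>
        (\<exists>L. \<forall>e>0. \<exists>N. \<forall>n\<ge>N. absv (s n - L) < e))"

text \<open>An element of the completion of O_t (= Z or A) at w is represented by the
  compatible sequence of its canonical residues modulo pi^k (k = 0,1,2,...).
  For int (w > 0) the canonical residue lies in [0, w^k); for polynomials its
  degree is < deg(w^k).\<close>

definition Obar :: "'a::euclidean_ring \<Rightarrow> (nat \<Rightarrow> 'a) set" where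
  "Obar w = {f. \<forall>k. f k = f (Suc k) mod w ^ k}"

definition digit :: "'a::euclidean_ring \<Rightarrow> (nat \<Rightarrow> 'a) \<Rightarrow> nat \<Rightarrow> 'a" where
  "digit w f i = (f (Suc i) - f i) div w ^ i"

definition phiO :: "'a::euclidean_ring \<Rightarrow> (nat \<Rightarrow> 'a) \<Rightarrow> (nat \<Rightarrow> 'a)" where
  "phiO w f = (\<lambda>k. \<Sum>i<k. digit w f (Suc i) * w ^ i)"

definition negO :: "'a::euclidean_ring \<Rightarrow> (nat \<Rightarrow> 'a) \<Rightarrow> (nat \<Rightarrow> 'a)" where
  "negO w f = (\<lambda>k. (- f k) mod w ^ k)"

text \<open>The natural embedding of the fraction a/d (d a unit in the completion) into the
  completion: the unique element y with d * y = a.\<close>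
definition embO :: "'a::euclidean_ring \<Rightarrow> 'a \<Rightarrow> 'a \<Rightarrow> (nat \<Rightarrow> 'a)" where
  "embO w d a = (THE y. y \<in> Obar w \<and> (\<forall>k. (d * y k) mod w ^ k = a mod w ^ k))"

text \<open>The product is taken over mZ components equal to Z (uniformisers-power PZ t,
  t < mZ) and mA components equal to A = F_q[theta] (PA t, t < mA).  An element is a
  pair of families of component elements; unused indices are fixed to 0.\<close>

type_synonym 'f obar = "(nat \<Rightarrow> nat \<Rightarrow> int) \<times> (nat \<Rightarrow> nat \<Rightarrow> 'f poly)"

definition ObarP :: "nat \<Rightarrow> nat \<Rightarrow> (nat \<Rightarrow> int) \<Rightarrow> (nat \<Rightarrow> 'f::{field,finite} poly)
    \<Rightarrow> 'f obar set" where
  "ObarP mZ mA PZ PA = {(xz, xa).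
      (\<forall>t<mZ. xz t \<in> Obar (PZ t)) \<and> (\<forall>t. mZ \<le> t \<longrightarrow> xz t = (\<lambda>_. 0)) \<and>
      (\<forall>t<mA. xa t \<in> Obar (PA t)) \<and> (\<forall>t. mA \<le> t \<longrightarrow> xa t = (\<lambda>_. 0))}"

definition phiP :: "nat \<Rightarrow> nat \<Rightarrow> (nat \<Rightarrow> int) \<Rightarrow> (nat \<Rightarrow> 'f::{field,finite} poly)
    \<Rightarrow> 'f obar \<Rightarrow> 'f obar" where
  "phiP mZ mA PZ PA x =
     ((\<lambda>t. if t < mZ then phiO (PZ t) (fst x t) else (\<lambda>_. 0)),
      (\<lambda>t. if t < mA then phiO (PA t) (snd x t) else (\<lambda>_. 0)))"

definition negP :: "nat \<Rightarrow> nat \<Rightarrow> (nat \<Rightarrow> int) \<Rightarrow> (nat \<Rightarrow> 'f::{field,finite} poly)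
    \<Rightarrow> 'f obar \<Rightarrow> 'f obar" where
  "negP mZ mA PZ PA x =
     ((\<lambda>t. if t < mZ then negO (PZ t) (fst x t) else (\<lambda>_. 0)),
      (\<lambda>t. if t < mA then negO (PA t) (snd x t) else (\<lambda>_. 0)))"

definition contP :: "nat \<Rightarrow> nat \<Rightarrow> (nat \<Rightarrow> int) \<Rightarrow> (nat \<Rightarrow> 'f::{field,finite} poly)
    \<Rightarrow> ('k::field \<Rightarrow> real) \<Rightarrow> ('f obar \<Rightarrow> 'k) \<Rightarrow> bool" where
  "contP mZ mA PZ PA absv H \<longleftrightarrow>
     (\<forall>x\<in>ObarP mZ mA PZ PA. \<forall>e>0. \<exists>N. \<forall>y\<in>ObarP mZ mA PZ PA.
        ((\<forall>t<mZ. fst y t N = fst x t N) \<and> (\<forall>t<mA. snd y t N = snd x t N)) \<longrightarrow>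
        absv (H y - H x) < e)"

definition nonvanishingP :: "nat \<Rightarrow> nat \<Rightarrow> (nat \<Rightarrow> int) \<Rightarrow> (nat \<Rightarrow> 'f::{field,finite} poly)
    \<Rightarrow> ('f obar \<Rightarrow> 'k::field) \<Rightarrow> bool" where
  "nonvanishingP mZ mA PZ PA H \<longleftrightarrow> (\<forall>x\<in>ObarP mZ mA PZ PA. H x \<noteq> 0)"

text \<open>An element of (pi_t^n - 1)^{-1} O_t is written b/(pi_t^n - 1)
  with b in O_t.  Its fractional part is r/(pi_t^n - 1) with r = b mod (pi_t^n - 1):
  for Z this is the residue in [0, pi_t^n - 1), for A the remainder of degree
  < deg(pi_t^n - 1), i.e. exactly the unique representative with 0 <= . < 1,
  resp. with |.| < 1.  fracP n bz ba is the element
  < (b_t/(pi_t^n - 1))_t > of Obar (via the natural embeddings).\<close>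
definition fracP :: "nat \<Rightarrow> nat \<Rightarrow> (nat \<Rightarrow> int) \<Rightarrow> (nat \<Rightarrow> 'f::{field,finite} poly)
    \<Rightarrow> nat \<Rightarrow> (nat \<Rightarrow> int) \<Rightarrow> (nat \<Rightarrow> 'f poly) \<Rightarrow> 'f obar" where
  "fracP mZ mA PZ PA n bz ba =
     ((\<lambda>t. if t < mZ then embO (PZ t) (PZ t ^ n - 1) (bz t mod (PZ t ^ n - 1))
           else (\<lambda>_. 0)),
      (\<lambda>t. if t < mA then embO (PA t) (PA t ^ n - 1) (ba t mod (PA t ^ n - 1))
           else (\<lambda>_. 0)))"

end

theory Submission
  imports Defs
begin

text \<open>Write \<open>\<psi>(x) = -\<phi>(-x)\<close>; on the periodic points \<open>b / (\<pi>^n - 1)\<close> it inverts multiplication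
  by \<open>\<pi>\<close>. Hence if \<open>H = \<Gamma> \<cdot> G / (G \<circ> \<psi>)\<close>, the product of \<open>G / (G \<circ> \<psi>)\<close> over a periodic orbit
  telescopes to \<open>1\<close>. Conversely, \<open>R = H / \<Gamma>\<close> is continuous and has product \<open>1\<close> over every
  periodic orbit. Since \<open>\<pi>^i x \<rightarrow> 0\<close> and \<open>R 0 = 1\<close>, the products of \<open>R (\<pi>^i x)\<close> over \<open>1 \<le> i \<le> K\<close>
  converge, uniformly in \<open>x\<close> by compactness, to a continuous non-vanishing \<open>L x\<close>, and
  \<open>G = 1 / L\<close> works: the identity \<open>R x \<cdot> L x = L (\<psi> x)\<close> follows by approximating \<open>x\<close> and
  \<open>\<psi> x\<close> by periodic points whose orbits agree for a long stretch, where the product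
  condition applies.\<close>

section \<open>Digit arithmetic in one component\<close>

definition psiO :: "'a::euclidean_ring \<Rightarrow> (nat \<Rightarrow> 'a) \<Rightarrow> (nat \<Rightarrow> 'a)" where
  "psiO w x = negO w (phiO w (negO w x))"

definition smulO :: "'a::euclidean_ring \<Rightarrow> 'a \<Rightarrow> (nat \<Rightarrow> 'a) \<Rightarrow> (nat \<Rightarrow> 'a)" where
  "smulO w c x = (\<lambda>k. (c * x k) mod w ^ k)"

definition geom_pow_sum :: "'a::euclidean_ring \<Rightarrow> nat \<Rightarrow> nat \<Rightarrow> 'a" where
  "geom_pow_sum w n k = (\<Sum>i<k. w ^ (n * i))"

text \<open>The expansion of \<open>r / (w^n - 1) = - r (1 + w^n + w^(2n) + \<dots>)\<close>.\<close>
definition periodic_expansion :: "'a::euclidean_ring \<Rightarrow> nat \<Rightarrow> 'a \<Rightarrow> (nat \<Rightarrow> 'a)" where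
  "periodic_expansion w n r = (\<lambda>k. (- (r * geom_pow_sum w n k)) mod w ^ k)"

definition neg_trunc :: "'a::euclidean_ring \<Rightarrow> (nat \<Rightarrow> 'a) \<Rightarrow> nat \<Rightarrow> 'a" where
  "neg_trunc w x L = (- x (Suc L)) mod w ^ Suc L"

text \<open>The arithmetic of canonical residues that the argument needs, shared by \<open>\<int>\<close> with
  \<open>w \<ge> 2\<close> and by \<open>F[\<theta>]\<close> with \<open>deg w \<ge> 1\<close>. A residue is \<^emph>\<open>reduced\<close> modulo \<open>m\<close> if
  \<open>a mod m = a\<close>.\<close>
locale adic_base =
  fixes w :: "'a::unique_euclidean_ring"
  assumes base_nonzero: "w \<noteq> 0"
    and div_mult_pow: "\<And>a i j. a div (w ^ i * w ^ j) = a div w ^ i div w ^ j"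
    and mod_mult_pow: "\<And>a i j. a mod (w ^ i * w ^ j) = w ^ i * (a div w ^ i mod w ^ j) + a mod w ^ i"
    and concat_reduced: "\<And>hi lo j u s. hi mod w ^ j = hi \<Longrightarrow> lo mod w ^ s = lo \<Longrightarrow> j < u \<Longrightarrow>
          (hi + w ^ u * lo) mod (w ^ (u + s) - 1) = hi + w ^ u * lo"
    and carry_reduced: "\<And>r r' c n. 1 \<le> n \<Longrightarrow> r mod (w ^ n - 1) = r \<Longrightarrow>
          r' mod (w ^ n - 1) = r' \<Longrightarrow> w * r - r' = c * (w ^ n - 1) \<Longrightarrow> c mod w = c"
    and finite_reduced: "\<And>N. finite {a. a mod w ^ N = a}"
begin

lemma mod_pow_mod_pow_le: "j \<le> k \<Longrightarrow> a mod w ^ k mod w ^ j = a mod w ^ j"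
  by (rule mod_mod_cancel) (simp add: le_imp_power_dvd)

lemma Obar_mod_pow:
  assumes "x \<in> Obar w"
  shows "x k mod w ^ k = x k"
proof -
  have "x k = x (Suc k) mod w ^ k" using assms unfolding Obar_def by blast
  then show ?thesis by simp
qed

lemma Obar_truncate:
  assumes x: "x \<in> Obar w" and "j \<le> k"
  shows "x j = x k mod w ^ j"
  using \<open>j \<le> k\<close>
proof (induction k rule: dec_induct)
  case (step k)
  have "x k = x (Suc k) mod w ^ k" using x unfolding Obar_def by blast
  with step show ?case by (simp add: mod_pow_mod_pow_le)
qed (simp add: Obar_mod_pow[OF x])

lemma Obar_0: "x \<in> Obar w \<Longrightarrow> x 0 = 0"
  using Obar_mod_pow[of x 0] by simp

lemma Obar_eq_below: "x \<in> Obar w \<Longrightarrow> y \<in> Obar w \<Longrightarrow> x k = y k \<Longrightarrow> j \<le> k \<Longrightarrow> x j = y j"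
  using Obar_truncate[of x j k] Obar_truncate[of y j k] by simp

lemma Obar_dvd_diff: "x \<in> Obar w \<Longrightarrow> j \<le> k \<Longrightarrow> w ^ j dvd x k - x j"
  using Obar_truncate[of x j k] by (metis mod_eq_dvd_iff mod_mod_trivial)

lemma residues_Obar:
  assumes "\<And>k. w ^ k dvd g (Suc k) - g k"
  shows "(\<lambda>k. g k mod w ^ k) \<in> Obar w"
  unfolding Obar_def
proof (intro CollectI allI)
  fix k
  have "g k mod w ^ k = g (Suc k) mod w ^ k"
    using assms[of k] by (simp add: mod_eq_dvd_iff dvd_diff_commute)
  also have "\<dots> = g (Suc k) mod w ^ Suc k mod w ^ k"
    using mod_pow_mod_pow_le[of k "Suc k"] by simp
  finally show "g k mod w ^ k = g (Suc k) mod w ^ Suc k mod w ^ k" .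
qed

lemma Obar_dvd_diff_Suc: "x \<in> Obar w \<Longrightarrow> w ^ k dvd x (Suc k) - x k"
  by (simp add: Obar_dvd_diff)

lemma negO_Obar:
  assumes x: "x \<in> Obar w"
  shows "negO w x \<in> Obar w"
  unfolding negO_def
proof (rule residues_Obar)
  fix k
  have "w ^ k dvd - (x (Suc k) - x k)" using Obar_dvd_diff_Suc[OF x] by (simp only: dvd_minus_iff)
  then show "w ^ k dvd - x (Suc k) - - x k" by (simp add: algebra_simps)
qed

lemma smulO_Obar:
  assumes x: "x \<in> Obar w"
  shows "smulO w c x \<in> Obar w"
  unfolding smulO_def
proof (rule residues_Obar)
  fix k
  have "w ^ k dvd c * (x (Suc k) - x k)" using Obar_dvd_diff_Suc[OF x] by (rule dvd_mult)
  then show "w ^ k dvd c * x (Suc k) - c * x k" by (simp add: algebra_simps)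
qed

lemma mod_base_pow_div_base: "a mod (w * w ^ k) div w = a div w mod w ^ k"
proof -
  have "a mod (w * w ^ k) = a div w mod w ^ k * w + a mod w"
    using mod_mult_pow[of a 1 k] by (simp add: mult.commute)
  then show ?thesis using base_nonzero by simp
qed

lemma phiO_eq: "x \<in> Obar w \<Longrightarrow> phiO w x k = x (Suc k) div w"
proof (induction k)
  case 0
  then have "x 1 mod w = x 1" using Obar_mod_pow[of x 1] by simp
  then show ?case by (simp add: phiO_def) (metis mod_div_trivial)
next
  case (Suc k)
  define X where "X = x (Suc (Suc k))"
  have "x (Suc k) = X mod w ^ Suc k" unfolding X_def using Suc.prems Obar_def by blast
  then have xk: "x (Suc k) = X mod (w * w ^ k)" by simp
  have "digit w x (Suc k) = X div (w * w ^ k)"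
    unfolding digit_def X_def[symmetric] xk minus_mod_eq_mult_div using base_nonzero by simp
  then have "phiO w x (Suc k) = X mod (w * w ^ k) div w + X div (w * w ^ k) * w ^ k"
    using Suc xk by (simp add: phiO_def)
  also have "\<dots> = X div w"
    using div_mult_pow[of X 1 k] by (simp add: mod_base_pow_div_base mod_div_mult_eq)
  finally show ?case by (simp only: X_def)
qed

lemma phiO_Obar:
  assumes x: "x \<in> Obar w"
  shows "phiO w x \<in> Obar w"
  unfolding Obar_def
proof (intro CollectI allI)
  fix k
  from x have "x (Suc k) = x (Suc (Suc k)) mod w ^ Suc k" unfolding Obar_def by blast
  then show "phiO w x k = phiO w x (Suc k) mod w ^ k"
    using phiO_eq[OF x] by (simp add: mod_base_pow_div_base)
qed

lemma psiO_Obar: "x \<in> Obar w \<Longrightarrow> psiO w x \<in> Obar w"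
  unfolding psiO_def by (intro negO_Obar phiO_Obar)

lemma psiO_eq: "x \<in> Obar w \<Longrightarrow> psiO w x k = (- ((- x (Suc k)) div w)) mod w ^ k"
  unfolding psiO_def negO_def[of w "phiO w (negO w x)"]
  by (simp add: phiO_eq negO_Obar, simp add: negO_def mod_base_pow_div_base mod_minus_eq)

lemma psiO_cong: "x \<in> Obar w \<Longrightarrow> y \<in> Obar w \<Longrightarrow> x (Suc k) = y (Suc k) \<Longrightarrow> psiO w x k = psiO w y k"
  by (simp add: psiO_eq)

lemma base_times_psiO:
  assumes "y \<in> Obar w"
  shows "w ^ Suc k dvd w * psiO w y k - (y (Suc k) + (- y (Suc k)) mod w)"
proof -
  define Y q d where "Y = y (Suc k)" and "q = (- Y) div w" and "d = (- Y) mod w"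
  have "psiO w y k mod w ^ k = (- q) mod w ^ k"
    using psiO_eq[OF assms] unfolding Y_def q_def by simp
  then have "w ^ k dvd psiO w y k - (- q)" by (simp add: mod_eq_dvd_iff)
  then have "w * w ^ k dvd w * (psiO w y k - (- q))" by (rule mult_dvd_mono[OF dvd_refl])
  then have dvd: "w ^ Suc k dvd w * psiO w y k - w * (- q)"
    by (simp only: power_Suc right_diff_distrib)
  have wq: "w * (- q) = Y + d"
  proof -
    have "w * (- q) = - (w * q + d) + d" by (simp add: algebra_simps)
    also have "w * q + d = - Y" unfolding q_def d_def by (rule mult_div_mod_eq)
    finally show ?thesis by simp
  qed
  show ?thesis using dvd unfolding wq Y_def d_def .
qed

lemma geom_pow_sum_mult: "(w ^ n - 1) * geom_pow_sum w n k = w ^ (n * k) - 1"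
  by (induction k) (simp_all add: geom_pow_sum_def algebra_simps power_add)

lemma periodic_expansion_Obar:
  assumes "1 \<le> n"
  shows "periodic_expansion w n r \<in> Obar w"
  unfolding periodic_expansion_def
proof (rule residues_Obar)
  fix k
  have "w ^ k dvd w ^ (n * k)" using assms by (simp add: le_imp_power_dvd)
  then show "w ^ k dvd - (r * geom_pow_sum w n (Suc k)) - - (r * geom_pow_sum w n k)"
    by (simp add: geom_pow_sum_def algebra_simps)
qed

lemma periodic_expansion_mult:
  assumes "1 \<le> n"
  shows "((w ^ n - 1) * periodic_expansion w n r k) mod w ^ k = r mod w ^ k"
proof -
  have "((w ^ n - 1) * periodic_expansion w n r k) mod w ^ k
      = ((w ^ n - 1) * - (r * geom_pow_sum w n k)) mod w ^ k"
    unfolding periodic_expansion_def by (simp add: mod_mult_right_eq)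
  also have "(w ^ n - 1) * - (r * geom_pow_sum w n k) = - r * ((w ^ n - 1) * geom_pow_sum w n k)"
    by (simp add: algebra_simps)
  also have "- r * ((w ^ n - 1) * geom_pow_sum w n k) = r - r * w ^ (n * k)"
    unfolding geom_pow_sum_mult by (simp add: algebra_simps)
  also have "(r - r * w ^ (n * k)) mod w ^ k = r mod w ^ k"
    using assms by (simp add: mod_eq_dvd_iff le_imp_power_dvd)
  finally show ?thesis .
qed

lemma periodic_expansion_unique:
  assumes n: "1 \<le> n" and y: "y \<in> Obar w"
    and h: "\<And>k. ((w ^ n - 1) * y k) mod w ^ k = r mod w ^ k"
  shows "y = periodic_expansion w n r"
proof
  fix k
  have "w ^ k dvd geom_pow_sum w n k * ((w ^ n - 1) * y k - r)"
    using h[of k] by (simp add: mod_eq_dvd_iff)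
  moreover have "geom_pow_sum w n k * ((w ^ n - 1) * y k - r)
      = ((w ^ n - 1) * geom_pow_sum w n k) * y k - geom_pow_sum w n k * r"
    by (simp add: algebra_simps)
  then have "geom_pow_sum w n k * ((w ^ n - 1) * y k - r)
      = w ^ (n * k) * y k - (y k - - (r * geom_pow_sum w n k))"
    unfolding geom_pow_sum_mult by (simp add: algebra_simps)
  moreover have "w ^ k dvd w ^ (n * k) * y k" using n by (simp add: le_imp_power_dvd)
  ultimately have "w ^ k dvd w ^ (n * k) * y k - (w ^ (n * k) * y k - (y k - - (r * geom_pow_sum w n k)))"
    by (simp only: dvd_diff)
  then have "w ^ k dvd y k - - (r * geom_pow_sum w n k)" by simp
  then have "y k mod w ^ k = (- (r * geom_pow_sum w n k)) mod w ^ k" by (simp only: mod_eq_dvd_iff)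
  then show "y k = periodic_expansion w n r k"
    unfolding periodic_expansion_def using Obar_mod_pow[OF y] by simp
qed

lemma embO_eq_periodic_expansion:
  assumes "1 \<le> n"
  shows "embO w (w ^ n - 1) r = periodic_expansion w n r"
  unfolding embO_def
proof (rule the_equality)
  show "periodic_expansion w n r \<in> Obar w \<and>
      (\<forall>k. ((w ^ n - 1) * periodic_expansion w n r k) mod w ^ k = r mod w ^ k)"
    using periodic_expansion_Obar[OF assms] periodic_expansion_mult[OF assms] by blast
qed (use periodic_expansion_unique[OF assms] in blast)

lemma periodic_expansion_low:
  assumes "N \<le> n"
  shows "periodic_expansion w n r N = (- r) mod w ^ N"
proof -
  have "w ^ N dvd geom_pow_sum w n N - 1"
  proof (cases N)
    case (Suc M)
    have "w ^ N dvd w ^ (n * Suc i)" for i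
      using assms by (intro le_imp_power_dvd) (simp add: trans_le_add1)
    then show ?thesis
      unfolding geom_pow_sum_def Suc sum.lessThan_Suc_shift by (simp add: dvd_sum Suc)
  qed simp
  then have "w ^ N dvd - r * (geom_pow_sum w n N - 1)" by (rule dvd_mult)
  then have "w ^ N dvd - (r * geom_pow_sum w n N) - - r" by (simp add: algebra_simps)
  then show ?thesis unfolding periodic_expansion_def by (simp only: mod_eq_dvd_iff)
qed

lemma carry_eq_mod_base:
  assumes n: "1 \<le> n" and "r mod (w ^ n - 1) = r" "r' mod (w ^ n - 1) = r'"
    and c: "w * r - r' = c * (w ^ n - 1)"
  shows "c = r' mod w"
proof -
  have wn: "w ^ n = w * w ^ (n - 1)" using n by (simp flip: power_Suc)
  have "c - r' - w * (c * w ^ (n - 1) - r) = (w * r - r') - c * (w ^ n - 1)"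
    unfolding wn by (simp add: algebra_simps)
  then have "c - r' = w * (c * w ^ (n - 1) - r)" unfolding c by simp
  then have "c mod w = r' mod w" by (simp add: mod_eq_dvd_iff)
  then show ?thesis using carry_reduced[OF assms] by simp
qed

text \<open>Multiplication by \<open>w\<close> permutes the periodic points with period \<open>n\<close>, and \<open>\<psi>\<close> undoes it.\<close>
lemma psiO_periodic_expansion:
  assumes n: "1 \<le> n" and r: "r mod (w ^ n - 1) = r" and r': "r' mod (w ^ n - 1) = r'"
    and wr: "(w * r) mod (w ^ n - 1) = r'"
  shows "psiO w (periodic_expansion w n r') = periodic_expansion w n r"
proof -
  define D y where "D = w ^ n - 1" and "y = periodic_expansion w n r'"
  have y: "y \<in> Obar w" unfolding y_def by (rule periodic_expansion_Obar[OF n])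
  have hy: "w ^ k dvd D * y k - r'" for k
    using periodic_expansion_mult[OF n, of r' k] unfolding D_def y_def by (simp only: mod_eq_dvd_iff)
  have "(w * r) mod D = r' mod D" using wr r' unfolding D_def by simp
  then have "D dvd w * r - r'" by (simp only: mod_eq_dvd_iff)
  then obtain c where "w * r - r' = D * c" by (rule dvdE)
  then have c: "w * r - r' = c * D" by (simp only: mult.commute)
  have c_digit: "c = r' mod w" using carry_eq_mod_base[OF n r r'] c unfolding D_def by blast
  have wn: "w ^ n = w * w ^ (n - 1)" using n by (simp flip: power_Suc)
  show ?thesis unfolding y_def[symmetric]
  proof (rule periodic_expansion_unique[OF n psiO_Obar[OF y]])
    fix k
    define Y where "Y = y (Suc k)"
    have hY: "w * w ^ k dvd D * Y - r'" using hy[of "Suc k"] unfolding Y_def by simp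
    then have "w dvd D * Y - r'" by (rule dvd_mult_left)
    then have "w dvd (D * Y - r') - w * (w ^ (n - 1) * Y)" by simp
    also have "(D * Y - r') - w * (w ^ (n - 1) * Y) = - Y - r'"
      unfolding D_def wn by (simp add: algebra_simps)
    finally have "(- Y) mod w = r' mod w" by (simp add: mod_eq_dvd_iff)
    then have "(- Y) mod w = c" using c_digit by simp
    then have "w * w ^ k dvd D * (w * psiO w y k - (Y + c))"
      using base_times_psiO[OF y, of k] unfolding Y_def[symmetric] by simp
    then have "w * w ^ k dvd D * (w * psiO w y k - (Y + c)) + (D * Y - r')"
      using hY by (rule dvd_add)
    also have "D * (w * psiO w y k - (Y + c)) + (D * Y - r') = w * (D * psiO w y k - r)"
    proof -
      have "D * (w * psiO w y k - (Y + c)) + (D * Y - r') - w * (D * psiO w y k - r)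
          = (w * r - r') - c * D"
        by (simp add: algebra_simps)
      then show ?thesis unfolding c by simp
    qed
    finally have "w ^ k dvd D * psiO w y k - r" using base_nonzero by simp
    then show "((w ^ n - 1) * psiO w y k) mod w ^ k = r mod w ^ k"
      unfolding D_def by (simp only: mod_eq_dvd_iff)
  qed
qed

lemma div_pow_eq_0:
  assumes "b mod w ^ j = b"
  shows "b div w ^ j = 0"
proof -
  have "w ^ j * (b div w ^ j) + b = b" using mult_div_mod_eq[of "w ^ j" b] assms by simp
  then show ?thesis using base_nonzero by simp
qed

lemma reduced_pow_mono:
  assumes "b mod w ^ j = b" "j \<le> k"
  shows "b mod w ^ k = b"
proof -
  have "b div w ^ k = b div w ^ j div w ^ (k - j)"
    using assms(2) div_mult_pow[of b j "k - j"] by (simp flip: power_add)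
  then have "b div w ^ k = 0" using div_pow_eq_0[OF assms(1)] by simp
  then show ?thesis using mult_div_mod_eq[of "w ^ k" b] by simp
qed

lemma div_pow_reduced:
  assumes "b mod w ^ (s + j) = b"
  shows "b div w ^ s mod w ^ j = b div w ^ s"
proof -
  have "b = w ^ s * (b div w ^ s mod w ^ j) + b mod w ^ s"
    using mod_mult_pow[of b s j] assms by (simp add: power_add)
  moreover have "b = w ^ s * (b div w ^ s) + b mod w ^ s" by (simp only: mult_div_mod_eq)
  ultimately have "w ^ s * (b div w ^ s mod w ^ j) = w ^ s * (b div w ^ s)"
    by (metis add_right_cancel)
  then show ?thesis using base_nonzero by simp
qed

lemma mult_pow_reduced:
  assumes b: "b mod w ^ j = b" and "i + j \<le> n" and "1 \<le> i \<or> j < n"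
  shows "(w ^ i * b) mod (w ^ n - 1) = w ^ i * b"
proof (cases "1 \<le> i")
  case True
  have "b mod w ^ (n - i) = b" using reduced_pow_mono[OF b] assms(2) by simp
  then have "(0 + w ^ i * b) mod (w ^ (i + (n - i)) - 1) = 0 + w ^ i * b"
    using concat_reduced[of 0 0 b "n - i" i] True by simp
  then show ?thesis using assms(2) by simp
next
  case False
  then have "i = 0" "j < n" using assms(3) by auto
  then show ?thesis using concat_reduced[of b j 0 0 n] b by simp
qed

lemma reduced_pow_minus_one: "b mod w ^ j = b \<Longrightarrow> j < n \<Longrightarrow> b mod (w ^ n - 1) = b"
  using concat_reduced[of b j 0 0 n] by simp

text \<open>Multiplying a reduced residue by \<open>w^u\<close> rotates its digits cyclically modulo \<open>w^(u+s) - 1\<close>.\<close>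
lemma mult_pow_mod_rotate:
  assumes "b mod w ^ (s + j) = b" "j < u"
  shows "(w ^ u * b) mod (w ^ (u + s) - 1) = b div w ^ s + w ^ u * (b mod w ^ s)"
proof -
  define hi lo where "hi = b div w ^ s" and "lo = b mod w ^ s"
  have "b = w ^ s * hi + lo" unfolding hi_def lo_def by (simp only: mult_div_mod_eq)
  then have "w ^ u * b = (hi + w ^ u * lo) + (w ^ (u + s) - 1) * hi"
    by (simp add: algebra_simps power_add)
  then have "(w ^ u * b) mod (w ^ (u + s) - 1) = (hi + w ^ u * lo) mod (w ^ (u + s) - 1)"
    by simp
  also have "\<dots> = hi + w ^ u * lo"
    by (rule concat_reduced[OF _ _ assms(2)])
      (use div_pow_reduced[OF assms(1)] in \<open>simp_all add: hi_def lo_def\<close>)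
  finally show ?thesis unfolding hi_def lo_def .
qed

lemma neg_plus_pow_mod_low: "N \<le> u \<Longrightarrow> (- (hi + w ^ u * lo)) mod w ^ N = (- hi) mod w ^ N"
  by (simp add: mod_eq_dvd_iff le_imp_power_dvd)

text \<open>Let \<open>m = neg_trunc w x L\<close>, the residue of \<open>-x\<close> modulo \<open>w^(L+1)\<close>, and \<open>K \<ge> 1\<close>. The orbit of
  \<open>m / (w^(K+L+1) - 1)\<close> under multiplication by \<open>w\<close> starts with points close to
  \<open>x, w x, \<dots>, w^K x\<close>, the orbit of \<open>(m div w) / (w^(K+L) - 1)\<close> starts with points close to
  \<open>\<psi> x, w \<psi> x, \<dots>, w^K \<psi> x\<close>, and the remaining \<open>L\<close> points of the two orbits are pairwise
  close.\<close>
context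
  fixes x :: "nat \<Rightarrow> 'a" and L :: nat
  assumes x: "x \<in> Obar w"
begin

lemma neg_trunc_reduced: "neg_trunc w x L mod w ^ Suc L = neg_trunc w x L"
  unfolding neg_trunc_def by simp

lemma neg_trunc_div_reduced: "neg_trunc w x L div w mod w ^ L = neg_trunc w x L div w"
  using div_pow_reduced[of "neg_trunc w x L" 1 L] neg_trunc_reduced by simp

lemma neg_trunc_dvd:
  assumes "N \<le> Suc L"
  shows "w ^ N dvd x N + neg_trunc w x L"
proof -
  have "w ^ N dvd x (Suc L) - x N" using Obar_dvd_diff[OF x assms] .
  moreover have "w ^ Suc L dvd neg_trunc w x L - (- x (Suc L))"
    unfolding neg_trunc_def by (simp only: mod_eq_dvd_iff[symmetric] mod_mod_trivial)
  then have "w ^ N dvd neg_trunc w x L - (- x (Suc L))"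
    using assms by (meson dvd_trans le_imp_power_dvd)
  ultimately have "w ^ N dvd (neg_trunc w x L - (- x (Suc L))) - (x (Suc L) - x N)"
    by (simp only: dvd_diff)
  then show ?thesis by (simp add: algebra_simps)
qed

lemma smulO_eq_neg_trunc:
  assumes "N \<le> Suc L"
  shows "smulO w (w ^ i) x N = (- (w ^ i * neg_trunc w x L)) mod w ^ N"
proof -
  have "w ^ N dvd w ^ i * (x N + neg_trunc w x L)" using neg_trunc_dvd[OF assms] by simp
  then show ?thesis unfolding smulO_def by (simp add: mod_eq_dvd_iff algebra_simps)
qed

lemma smulO_psiO_eq_neg_trunc:
  assumes "N \<le> L"
  shows "smulO w (w ^ i) (psiO w x) N = (- (w ^ i * (neg_trunc w x L div w))) mod w ^ N"
proof -
  have "w ^ Suc N dvd x (Suc N) + neg_trunc w x L" using assms by (intro neg_trunc_dvd) simp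
  then have "w ^ Suc N dvd - (x (Suc N) + neg_trunc w x L)" by (simp only: dvd_minus_iff)
  then have "(- x (Suc N)) mod (w * w ^ N) = neg_trunc w x L mod (w * w ^ N)"
    by (simp add: mod_eq_dvd_iff algebra_simps)
  then have "(- x (Suc N)) div w mod w ^ N = neg_trunc w x L div w mod w ^ N"
    by (simp only: mod_base_pow_div_base[symmetric])
  then have "psiO w x N = (- (neg_trunc w x L div w)) mod w ^ N"
    unfolding psiO_eq[OF x] by (metis mod_minus_eq)
  then show ?thesis unfolding smulO_def by (simp add: mod_mult_right_eq)
qed

lemma periodic_expansion_neg_trunc:
  assumes "1 \<le> K" "i \<le> K" and "N \<le> K + L + 1"
  shows "periodic_expansion w (K + L + 1) ((w ^ i * neg_trunc w x L) mod (w ^ (K + L + 1) - 1)) N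
    = (- (w ^ i * neg_trunc w x L)) mod w ^ N"
proof -
  have "(w ^ i * neg_trunc w x L) mod (w ^ (K + L + 1) - 1) = w ^ i * neg_trunc w x L"
    by (rule mult_pow_reduced[OF neg_trunc_reduced]) (use assms in auto)
  then show ?thesis using periodic_expansion_low[OF assms(3)] by simp
qed

lemma periodic_expansion_neg_trunc_div:
  assumes "1 \<le> K" "i \<le> K" and "N \<le> K + L"
  shows "periodic_expansion w (K + L) ((w ^ i * (neg_trunc w x L div w)) mod (w ^ (K + L) - 1)) N
    = (- (w ^ i * (neg_trunc w x L div w))) mod w ^ N"
proof -
  have "(w ^ i * (neg_trunc w x L div w)) mod (w ^ (K + L) - 1) = w ^ i * (neg_trunc w x L div w)"
    by (rule mult_pow_reduced[OF neg_trunc_div_reduced]) (use assms in auto)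
  then show ?thesis using periodic_expansion_low[OF assms(3)] by simp
qed

lemma periodic_expansion_neg_trunc_rotated:
  assumes "1 \<le> K" "1 \<le> j" "j \<le> L" and "N \<le> K"
  shows "periodic_expansion w (K + L + 1) ((w ^ (K + j) * neg_trunc w x L) mod (w ^ (K + L + 1) - 1)) N
    = (- (neg_trunc w x L div w ^ (L + 1 - j))) mod w ^ N"
proof -
  let ?m = "neg_trunc w x L"
  have "?m mod w ^ ((L + 1 - j) + j) = ?m" using neg_trunc_reduced assms by simp
  from mult_pow_mod_rotate[OF this, of "K + j"] assms
  have "(w ^ (K + j) * ?m) mod (w ^ (K + L + 1) - 1)
      = ?m div w ^ (L + 1 - j) + w ^ (K + j) * (?m mod w ^ (L + 1 - j))"
    by (simp add: algebra_simps)
  then show ?thesis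
    using periodic_expansion_low[of N "K + L + 1"] neg_plus_pow_mod_low[of N "K + j"] assms by simp
qed

lemma periodic_expansion_neg_trunc_div_rotated:
  assumes "1 \<le> K" "1 \<le> j" "j \<le> L" and "N \<le> K"
  shows "periodic_expansion w (K + L) ((w ^ (K + j) * (neg_trunc w x L div w)) mod (w ^ (K + L) - 1)) N
    = (- (neg_trunc w x L div w ^ (L + 1 - j))) mod w ^ N"
proof -
  let ?e = "neg_trunc w x L div w"
  have "?e mod w ^ ((L - j) + j) = ?e" using neg_trunc_div_reduced assms by simp
  from mult_pow_mod_rotate[OF this, of "K + j"] assms
  have "(w ^ (K + j) * ?e) mod (w ^ (K + L) - 1) = ?e div w ^ (L - j) + w ^ (K + j) * (?e mod w ^ (L - j))"
    by (simp add: algebra_simps)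
  moreover have "?e div w ^ (L - j) = neg_trunc w x L div w ^ (L + 1 - j)"
    using div_mult_pow[of "neg_trunc w x L" 1 "L - j"] assms by (simp add: Suc_diff_le)
  ultimately show ?thesis
    using periodic_expansion_low[of N "K + L"] neg_plus_pow_mod_low[of N "K + j"] assms by simp
qed

end

end

section \<open>The components \<open>\<int>\<close> and \<open>F\<^sub>q[\<theta>]\<close>\<close>

lemma int_reduced_iff:
  fixes a m :: int
  assumes "0 < m"
  shows "a mod m = a \<longleftrightarrow> 0 \<le> a \<and> a < m"
  using assms by (metis mod_pos_pos_trivial pos_mod_bound pos_mod_sign)

lemma int_pow_minus_one_pos:
  fixes w :: int
  assumes "2 \<le> w" "1 \<le> n"
  shows "0 < w ^ n - 1"
proof -
  have "w ^ 1 \<le> w ^ n" using assms by (intro power_increasing) auto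
  then show ?thesis using assms by simp
qed

lemma int_concat_reduced:
  fixes w hi lo :: int
  assumes w: "2 \<le> w" and "hi mod w ^ j = hi" "lo mod w ^ s = lo" "j < u"
  shows "(hi + w ^ u * lo) mod (w ^ (u + s) - 1) = hi + w ^ u * lo"
proof -
  have pow_pos: "0 < w ^ k" for k using w by simp
  have hi: "0 \<le> hi" "hi < w ^ j" and lo: "0 \<le> lo" "lo \<le> w ^ s - 1"
    using assms(2,3) by (simp_all add: int_reduced_iff[OF pow_pos])
  have "w ^ j < w ^ u" using \<open>j < u\<close> w by (simp add: power_strict_increasing)
  moreover have "w ^ u * lo \<le> w ^ u * (w ^ s - 1)" using lo pow_pos by simp
  ultimately have "hi + w ^ u * lo < w ^ (u + s) - 1"
    using hi by (simp add: algebra_simps power_add)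
  moreover have "0 \<le> hi + w ^ u * lo"
    using hi lo pow_pos[of u] by (intro add_nonneg_nonneg mult_nonneg_nonneg) simp_all
  ultimately show ?thesis by simp
qed

lemma int_carry_reduced:
  fixes w r r' c :: int
  assumes w: "2 \<le> w" and n: "1 \<le> n" and "r mod (w ^ n - 1) = r" "r' mod (w ^ n - 1) = r'"
    and c: "w * r - r' = c * (w ^ n - 1)"
  shows "c mod w = c"
proof -
  note D_pos = int_pow_minus_one_pos[OF w n]
  have r: "0 \<le> r" "r < w ^ n - 1" and r': "0 \<le> r'" "r' < w ^ n - 1"
    using assms(3,4) by (simp_all add: int_reduced_iff[OF D_pos])
  have "0 \<le> w * r" using r w by simp
  then have "0 < (c + 1) * (w ^ n - 1)" using c r' by (simp add: algebra_simps)
  then have "0 \<le> c" using D_pos zero_less_mult_pos2 by fastforce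
  moreover have "w * r < w * (w ^ n - 1)" using r w by simp
  then have "0 < (w - c) * (w ^ n - 1)" using c r' by (simp add: algebra_simps)
  then have "c < w" using D_pos zero_less_mult_pos2 by fastforce
  ultimately show ?thesis by simp
qed

lemma adic_base_int:
  fixes w :: int
  assumes w: "2 \<le> w"
  shows "adic_base w"
proof
  show "w \<noteq> 0" using w by simp
  fix a :: int and i j :: nat
  show "a div (w ^ i * w ^ j) = a div w ^ i div w ^ j" using w by (simp add: zdiv_zmult2_eq)
  show "a mod (w ^ i * w ^ j) = w ^ i * (a div w ^ i mod w ^ j) + a mod w ^ i"
    using w by (simp add: zmod_zmult2_eq)
next
  fix N
  have "{a. a mod w ^ N = a} \<subseteq> {0..<w ^ N}" using w by (auto simp: int_reduced_iff)
  then show "finite {a. a mod w ^ N = a}" by (rule finite_subset) simp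
qed (use int_concat_reduced int_carry_reduced w in blast)+

lemma degree_pow_minus_one:
  fixes w :: "'f::field poly"
  assumes "1 \<le> degree w" "1 \<le> k"
  shows "degree (w ^ k - 1) = k * degree w"
proof -
  have "w \<noteq> 0" using assms(1) by auto
  then have "degree (w ^ k) = k * degree w" by (rule degree_power_eq)
  moreover have "degree (w ^ k + - 1) = degree (w ^ k)"
    by (rule degree_add_eq_left) (use calculation assms in simp)
  ultimately show ?thesis by simp
qed

lemma poly_reduced_degree:
  fixes a m :: "'f::field poly"
  assumes "a mod m = a" "m \<noteq> 0"
  shows "a = 0 \<or> degree a < degree m"
  using assms by (metis degree_mod_less')

lemma poly_reduced_degree_less:
  fixes a w :: "'f::field poly"
  assumes "a mod (w ^ n - 1) = a" "1 \<le> degree w" "1 \<le> n"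
  shows "degree a < degree (w ^ n - 1)"
proof -
  have "1 \<le> degree (w ^ n - 1)" using degree_pow_minus_one[OF assms(2,3)] assms(2,3) by simp
  then show ?thesis using poly_reduced_degree[OF assms(1)] by fastforce
qed

lemma finite_degree_le: "finite {p :: 'f::{field,finite} poly. degree p \<le> d}"
proof -
  have "coeffs ` {p :: 'f poly. degree p \<le> d} \<subseteq> {xs. set xs \<subseteq> UNIV \<and> length xs \<le> Suc d}"
  proof clarsimp
    fix p :: "'f poly" assume "degree p \<le> d"
    then show "length (coeffs p) \<le> Suc d" by (cases "p = 0") (simp_all add: length_coeffs_degree)
  qed
  then have "finite (coeffs ` {p :: 'f poly. degree p \<le> d})"
    by (rule finite_subset) (rule finite_lists_length_le, simp)
  then show ?thesis by (rule finite_imageD) (simp add: inj_on_def coeffs_eq_iff)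
qed

lemma poly_reduced_pow_degree:
  fixes a w :: "'f::field poly"
  assumes "a mod w ^ k = a" "1 \<le> degree w" "a \<noteq> 0"
  shows "degree a < k * degree w"
proof -
  have "w \<noteq> 0" using assms(2) by auto
  then show ?thesis using poly_reduced_degree[OF assms(1)] assms(3) by (simp add: degree_power_eq)
qed

lemma poly_concat_reduced:
  fixes w hi lo :: "'f::field poly"
  assumes dw: "1 \<le> degree w" and h: "hi mod w ^ j = hi" and l: "lo mod w ^ s = lo" and "j < u"
  shows "(hi + w ^ u * lo) mod (w ^ (u + s) - 1) = hi + w ^ u * lo"
proof -
  have w0: "w \<noteq> 0" using dw by auto
  have "degree hi < (u + s) * degree w"
  proof (cases "hi = 0")
    case False
    then have "degree hi < j * degree w" by (rule poly_reduced_pow_degree[OF h dw])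
    also have "\<dots> \<le> (u + s) * degree w" using \<open>j < u\<close> by simp
    finally show ?thesis .
  qed (use dw \<open>j < u\<close> in simp)
  moreover have "degree (w ^ u * lo) < (u + s) * degree w"
  proof (cases "lo = 0")
    case False
    then have "degree lo < s * degree w" by (rule poly_reduced_pow_degree[OF l dw])
    then show ?thesis using False w0 by (simp add: degree_mult_eq degree_power_eq algebra_simps)
  qed (use dw \<open>j < u\<close> in simp)
  ultimately have "degree (hi + w ^ u * lo) < degree (w ^ (u + s) - 1)"
    using degree_add_le_max[of hi "w ^ u * lo"] degree_pow_minus_one[OF dw] \<open>j < u\<close> by simp
  then show ?thesis by (rule mod_poly_less)
qed

lemma poly_carry_reduced:
  fixes w r r' c :: "'f::field poly"
  assumes dw: "1 \<le> degree w" and n: "1 \<le> n"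
    and r: "r mod (w ^ n - 1) = r" and r': "r' mod (w ^ n - 1) = r'"
    and c: "w * r - r' = c * (w ^ n - 1)"
  shows "c mod w = c"
proof (cases "c = 0")
  case False
  have w0: "w \<noteq> 0" using dw by auto
  have dD: "degree (w ^ n - 1) = n * degree w" by (rule degree_pow_minus_one[OF dw n])
  then have D0: "w ^ n - 1 \<noteq> 0" using n dw by (metis degree_0 mult_is_0 not_one_le_zero)
  have small: "degree p < n * degree w" if "p mod (w ^ n - 1) = p" "p \<noteq> 0" for p
    using poly_reduced_degree[OF that(1) D0] that(2) dD by simp
  have "degree (w * r) < degree w + n * degree w"
    using small[OF r] w0 dw by (cases "r = 0") (simp_all add: degree_mult_eq)
  moreover have "degree r' < degree w + n * degree w"
    using small[OF r'] dw n by (cases "r' = 0") simp_all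
  ultimately have "degree (c * (w ^ n - 1)) < degree w + n * degree w"
    unfolding c[symmetric] using degree_diff_le_max[of "w * r" r'] by simp
  then have "degree c < degree w" using False D0 dD by (simp add: degree_mult_eq)
  then show ?thesis by (rule mod_poly_less)
qed simp

lemma adic_base_poly:
  fixes w :: "'f::{field,finite} poly"
  assumes dw: "1 \<le> degree w"
  shows "adic_base w"
proof
  show "w \<noteq> 0" using dw by auto
  fix a :: "'f poly" and i j :: nat
  show "a div (w ^ i * w ^ j) = a div w ^ i div w ^ j" by (rule poly_div_mult_right)
  show "a mod (w ^ i * w ^ j) = w ^ i * (a div w ^ i mod w ^ j) + a mod w ^ i"
    by (rule poly_mod_mult_right)
next
  fix N
  have "{a. a mod w ^ N = a} \<subseteq> {p. degree p \<le> N * degree w}"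
    using poly_reduced_pow_degree[OF _ dw] by (fastforce simp: less_imp_le)
  then show "finite {a. a mod w ^ N = a}" by (rule finite_subset) (rule finite_degree_le)
qed (use poly_concat_reduced poly_carry_reduced dw in blast)+

section \<open>Non-Archimedean absolute values\<close>

locale nonarch_abs =
  fixes absv :: "'k::field \<Rightarrow> real"
  assumes nonarch_complete: "nonarch_complete_field absv"
begin

lemma absv_nonneg: "0 \<le> absv x"
  and absv_eq_0_iff [simp]: "absv x = 0 \<longleftrightarrow> x = 0"
  and absv_mult: "absv (x * y) = absv x * absv y"
  and absv_ultrametric: "absv (x + y) \<le> max (absv x) (absv y)"
  using nonarch_complete unfolding nonarch_complete_field_def by blast+

lemma absv_complete:
  fixes s :: "nat \<Rightarrow> 'k"
  assumes "\<forall>e>0. \<exists>N. \<forall>m\<ge>N. \<forall>n\<ge>N. absv (s m - s n) < e"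
  shows "\<exists>L. \<forall>e>0. \<exists>N. \<forall>n\<ge>N. absv (s n - L) < e"
  using nonarch_complete assms unfolding nonarch_complete_field_def by blast

lemma absv_0 [simp]: "absv 0 = 0"
  by simp

lemma absv_pos: "x \<noteq> 0 \<Longrightarrow> 0 < absv x"
  using absv_nonneg[of x] absv_eq_0_iff[of x] by linarith

lemma absv_1 [simp]: "absv 1 = 1"
  using absv_mult[of 1 1] by simp

lemma absv_minus [simp]: "absv (- x) = absv x"
proof -
  have "absv (- 1) ^ 2 = 1" using absv_mult[of "- 1" "- 1"] by (simp add: power2_eq_square)
  then have "absv (- 1) = 1" using absv_nonneg[of "- 1"] by (simp add: power2_eq_1_iff)
  then show ?thesis using absv_mult[of "- 1" x] by simp
qed

lemma absv_minus_commute: "absv (x - y) = absv (y - x)"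
  using absv_minus[of "x - y"] by simp

lemma absv_divide: "absv (x / y) = absv x / absv y"
proof (cases "y = 0")
  case False
  then have "absv (x / y) * absv y = absv x" by (simp flip: absv_mult)
  then show ?thesis using False by (simp add: field_simps)
qed simp

lemma absv_add_less: "absv a < e \<Longrightarrow> absv b < e \<Longrightarrow> absv (a + b) < e"
  using absv_ultrametric[of a b] by simp

lemma absv_eq_if_diff_less:
  assumes "absv (x - y) < absv y"
  shows "absv x = absv y"
proof -
  have "absv x \<le> absv y" using absv_ultrametric[of "x - y" y] assms by simp
  moreover have "absv y \<le> absv x"
    using absv_ultrametric[of "y - x" x] assms absv_minus_commute[of x y]
    by (auto simp: max_def split: if_splits)
  ultimately show ?thesis by simp
qed

text \<open>Continuity and convergence of non-vanishing functions are measured multiplicatively.\<close>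
definition near_one :: "real \<Rightarrow> 'k \<Rightarrow> bool" where
  "near_one e a \<longleftrightarrow> absv (a - 1) < e"

lemma near_one_mono: "near_one e a \<Longrightarrow> e \<le> e' \<Longrightarrow> near_one e' a"
  unfolding near_one_def by simp

lemma near_one_absv: "e \<le> 1 \<Longrightarrow> near_one e a \<Longrightarrow> absv a = 1"
  using absv_eq_if_diff_less[of a 1] unfolding near_one_def by simp

lemma near_one_nonzero: "e \<le> 1 \<Longrightarrow> near_one e a \<Longrightarrow> a \<noteq> 0"
  using near_one_absv by fastforce

lemma near_one_mult:
  assumes e: "e \<le> 1" and a: "near_one e a" and b: "near_one e b"
  shows "near_one e (a * b)"
proof -
  have "absv ((a - 1) * (b - 1)) \<le> absv (a - 1)"
    using b e absv_nonneg[of "a - 1"] unfolding near_one_def absv_mult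
    by (simp add: mult_left_le)
  then have "absv ((a - 1) * (b - 1)) < e" using a unfolding near_one_def by simp
  moreover have "absv ((a - 1) + (b - 1)) < e" using a b unfolding near_one_def by (rule absv_add_less)
  moreover have "a * b - 1 = (a - 1) * (b - 1) + ((a - 1) + (b - 1))" by (simp add: algebra_simps)
  ultimately show ?thesis unfolding near_one_def by (metis absv_add_less)
qed

lemma near_one_prod:
  assumes "0 < e" "e \<le> 1" "\<And>i. i \<in> S \<Longrightarrow> near_one e (f i)"
  shows "near_one e (\<Prod>i\<in>S. f i)"
  using assms(3)
proof (induction S rule: infinite_finite_induct)
  case (insert x F)
  then show ?case using near_one_mult[OF assms(2)] by simp
qed (simp_all add: assms(1) near_one_def)

lemma near_one_inverse:
  assumes e: "e \<le> 1" and a: "near_one e a"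
  shows "near_one e (inverse a)"
proof -
  have "inverse a - 1 = - (a - 1) / a" using near_one_nonzero[OF e a] by (simp add: field_simps)
  then have "absv (inverse a - 1) = absv (a - 1)"
    using near_one_absv[OF e a] by (simp add: absv_divide absv_minus_commute)
  then show ?thesis using a unfolding near_one_def by simp
qed

lemma near_one_divide: "e \<le> 1 \<Longrightarrow> near_one e a \<Longrightarrow> near_one e b \<Longrightarrow> near_one e (a / b)"
  by (simp add: divide_inverse near_one_mult near_one_inverse)

lemma near_one_eq_1:
  assumes "\<And>e. 0 < e \<Longrightarrow> near_one e a"
  shows "a = 1"
proof (rule ccontr)
  assume "a \<noteq> 1"
  then have "0 < absv (a - 1)" using absv_pos by simp
  then show False using assms[of "absv (a - 1)"] unfolding near_one_def by simp
qed

lemma near_one_divide_iff: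
  assumes "a \<noteq> 0"
  shows "near_one e (b / a) \<longleftrightarrow> absv (b - a) < e * absv a"
proof -
  have "b / a - 1 = (b - a) / a" using assms by (simp add: field_simps)
  then show ?thesis
    unfolding near_one_def using absv_pos[OF assms] by (simp add: absv_divide pos_divide_less_eq)
qed

lemma ratio_cauchy_absv_eventually_const:
  fixes s :: "nat \<Rightarrow> 'k"
  assumes nz: "\<And>K. s K \<noteq> 0"
    and cau: "\<And>e. 0 < e \<Longrightarrow> \<exists>N. \<forall>K K'. N \<le> K \<longrightarrow> K \<le> K' \<longrightarrow> near_one e (s K' / s K)"
  obtains c N1 where "0 < c" "\<And>K. N1 \<le> K \<Longrightarrow> absv (s K) = c"
    and "\<And>e. 0 < e \<Longrightarrow> \<exists>N. \<forall>K K'. N \<le> K \<longrightarrow> K \<le> K' \<longrightarrow> absv (s K' - s K) < e * c"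
proof -
  obtain N1 where N1: "\<And>K K'. N1 \<le> K \<Longrightarrow> K \<le> K' \<Longrightarrow> near_one 1 (s K' / s K)"
    using cau[of 1] by auto
  define c where "c = absv (s N1)"
  have c: "0 < c" unfolding c_def using absv_pos nz by blast
  have abs_s: "absv (s K) = c" if "N1 \<le> K" for K
    using near_one_absv[OF _ N1[OF order.refl that]] nz[of N1] unfolding c_def
    by (simp add: absv_divide)
  have "\<exists>N. \<forall>K K'. N \<le> K \<longrightarrow> K \<le> K' \<longrightarrow> absv (s K' - s K) < e * c" if e: "0 < e" for e
  proof -
    obtain N where "\<forall>K K'. N \<le> K \<longrightarrow> K \<le> K' \<longrightarrow> near_one e (s K' / s K)"
      using cau[OF e] by blast
    then have "\<forall>K K'. max N N1 \<le> K \<longrightarrow> K \<le> K' \<longrightarrow> absv (s K' - s K) < e * c"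
      using near_one_divide_iff[OF nz] abs_s by auto
    then show ?thesis by blast
  qed
  with c abs_s show ?thesis using that by blast
qed

lemma ratio_cauchy_limit:
  fixes s :: "nat \<Rightarrow> 'k"
  assumes nz: "\<And>K. s K \<noteq> 0"
    and cau: "\<And>e. 0 < e \<Longrightarrow> \<exists>N. \<forall>K K'. N \<le> K \<longrightarrow> K \<le> K' \<longrightarrow> near_one e (s K' / s K)"
  shows "\<exists>L. L \<noteq> 0 \<and> (\<forall>e>0. \<exists>N. \<forall>K\<ge>N. near_one e (L / s K))"
proof -
  obtain c N1 where c: "0 < c" and abs_s: "\<And>K. N1 \<le> K \<Longrightarrow> absv (s K) = c"
    and diff: "\<And>e. 0 < e \<Longrightarrow> \<exists>N. \<forall>K K'. N \<le> K \<longrightarrow> K \<le> K' \<longrightarrow> absv (s K' - s K) < e * c"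
    using ratio_cauchy_absv_eventually_const[OF nz cau] by blast
  have "\<forall>e>0. \<exists>N. \<forall>m\<ge>N. \<forall>n\<ge>N. absv (s m - s n) < e"
  proof (intro allI impI)
    fix e :: real assume "0 < e"
    then obtain N where N: "\<forall>K K'. N \<le> K \<longrightarrow> K \<le> K' \<longrightarrow> absv (s K' - s K) < e / c * c"
      using diff[of "e / c"] c by auto
    have "absv (s m - s n) < e" if "N \<le> m" "N \<le> n" for m n
    proof -
      have "absv ((s m - s N) + (s N - s n)) < e"
        using N that c absv_minus_commute[of "s N" "s n"] by (intro absv_add_less) auto
      then show ?thesis by simp
    qed
    then show "\<exists>N. \<forall>m\<ge>N. \<forall>n\<ge>N. absv (s m - s n) < e" by blast
  qed
  then obtain L where L: "\<And>e. 0 < e \<Longrightarrow> \<exists>N. \<forall>n\<ge>N. absv (s n - L) < e"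
    using absv_complete by blast
  obtain N2 where "\<forall>n\<ge>N2. absv (s n - L) < c" using L[OF c] by blast
  then have "absv (L - s (max N1 N2)) < absv (s (max N1 N2))"
    using abs_s[of "max N1 N2"] absv_minus_commute by simp
  then have "absv L = absv (s (max N1 N2))" by (rule absv_eq_if_diff_less)
  then have L0: "L \<noteq> 0" using abs_s c by auto
  have "\<exists>N. \<forall>K\<ge>N. near_one e (L / s K)" if e: "0 < e" for e
  proof -
    obtain N where N: "\<forall>K K'. N \<le> K \<longrightarrow> K \<le> K' \<longrightarrow> absv (s K' - s K) < e * c"
      using diff[OF e] by blast
    have "near_one e (L / s K)" if K: "max N1 N \<le> K" for K
    proof -
      have "0 < e * c" using e c by simp
      then obtain N3 where "\<forall>n\<ge>N3. absv (s n - L) < e * c" using L by blast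
      then have "absv (L - s (max K N3)) < e * c" using absv_minus_commute by simp
      moreover have "absv (s (max K N3) - s K) < e * c" using N K by simp
      ultimately have "absv ((L - s (max K N3)) + (s (max K N3) - s K)) < e * c"
        by (rule absv_add_less)
      then have "absv (L - s K) < e * c" by simp
      then show ?thesis using near_one_divide_iff[OF nz] abs_s K by simp
    qed
    then show ?thesis by blast
  qed
  with L0 show ?thesis by blast
qed

end

section \<open>The product space and its periodic points\<close>

lemma prod_lessThan_add:
  fixes g :: "nat \<Rightarrow> 'a::comm_monoid_mult"
  shows "(\<Prod>i<a + b. g i) = (\<Prod>i<a. g i) * (\<Prod>j<b. g (a + j))"
  by (induction b) (simp_all add: mult.assoc)

lemma prod_lessThan_periodic_shift:
  fixes g :: "nat \<Rightarrow> 'a::comm_monoid_mult"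
  assumes "\<And>i. g (i + n) = g i"
  shows "(\<Prod>j<n. g (j + s)) = (\<Prod>j<n. g j)"
proof (induction s)
  case (Suc s)
  have "(\<Prod>j<n. h (Suc j)) = (\<Prod>j<n. h j)" if "h n = h 0" for h :: "nat \<Rightarrow> 'a"
  proof (cases n)
    case (Suc m)
    have "(\<Prod>j<n. h (Suc j)) = (\<Prod>j<m. h (Suc j)) * h (Suc m)" unfolding Suc by simp
    moreover have "(\<Prod>j<n. h j) = h 0 * (\<Prod>j<m. h (Suc j))"
      unfolding Suc prod.lessThan_Suc_shift by simp
    ultimately show ?thesis using that Suc by (simp add: mult.commute)
  qed simp
  from this[of "\<lambda>j. g (j + s)"] have "(\<Prod>j<n. g (j + Suc s)) = (\<Prod>j<n. g (j + s))"
    using assms[of s] by (simp add: add.commute)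
  then show ?case using Suc by simp
qed simp

lemma pow_mod_pow_minus_one_period:
  "((w :: 'a::unique_euclidean_ring) ^ (j + n) * a) mod (w ^ n - 1) = (w ^ j * a) mod (w ^ n - 1)"
proof -
  have "w ^ (j + n) * a - w ^ j * a = (w ^ n - 1) * (w ^ j * a)" by (simp add: algebra_simps power_add)
  then show ?thesis by (simp add: mod_eq_dvd_iff)
qed

locale obar_product =
  fixes mZ mA :: nat and PZ :: "nat \<Rightarrow> int" and PA :: "nat \<Rightarrow> 'f::{field,finite} poly"
  assumes PZ_ge_2: "\<And>t. t < mZ \<Longrightarrow> 2 \<le> PZ t"
    and PA_degree: "\<And>t. t < mA \<Longrightarrow> 1 \<le> degree (PA t)"
begin

lemma adic_base_PZ: "t < mZ \<Longrightarrow> adic_base (PZ t)"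
  using adic_base_int PZ_ge_2 by blast

lemma adic_base_PA: "t < mA \<Longrightarrow> adic_base (PA t)"
  using adic_base_poly PA_degree by blast

abbreviation Ob :: "'f obar set" where
  "Ob \<equiv> ObarP mZ mA PZ PA"

abbreviation fracO :: "nat \<Rightarrow> (nat \<Rightarrow> int) \<Rightarrow> (nat \<Rightarrow> 'f poly) \<Rightarrow> 'f obar" where
  "fracO \<equiv> fracP mZ mA PZ PA"

definition agree :: "nat \<Rightarrow> 'f obar \<Rightarrow> 'f obar \<Rightarrow> bool" where
  "agree N x y \<longleftrightarrow> (\<forall>t<mZ. fst x t N = fst y t N) \<and> (\<forall>t<mA. snd x t N = snd y t N)"

definition psiP :: "'f obar \<Rightarrow> 'f obar" where
  "psiP x = negP mZ mA PZ PA (phiP mZ mA PZ PA (negP mZ mA PZ PA x))"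

definition scaleP :: "nat \<Rightarrow> 'f obar \<Rightarrow> 'f obar" where
  "scaleP k x =
     ((\<lambda>t. if t < mZ then smulO (PZ t) (PZ t ^ k) (fst x t) else (\<lambda>_. 0)),
      (\<lambda>t. if t < mA then smulO (PA t) (PA t ^ k) (snd x t) else (\<lambda>_. 0)))"

definition zeroP :: "'f obar" where
  "zeroP = ((\<lambda>t _. 0), (\<lambda>t _. 0))"

lemma Ob_iff: "x \<in> Ob \<longleftrightarrow>
    (\<forall>t<mZ. fst x t \<in> Obar (PZ t)) \<and> (\<forall>t. mZ \<le> t \<longrightarrow> fst x t = (\<lambda>_. 0)) \<and>
    (\<forall>t<mA. snd x t \<in> Obar (PA t)) \<and> (\<forall>t. mA \<le> t \<longrightarrow> snd x t = (\<lambda>_. 0))"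
  unfolding ObarP_def by (cases x) simp

lemma Ob_fst: "x \<in> Ob \<Longrightarrow> t < mZ \<Longrightarrow> fst x t \<in> Obar (PZ t)"
  and Ob_snd: "x \<in> Ob \<Longrightarrow> t < mA \<Longrightarrow> snd x t \<in> Obar (PA t)"
  and Ob_fst_out: "x \<in> Ob \<Longrightarrow> \<not> t < mZ \<Longrightarrow> fst x t = (\<lambda>_. 0)"
  and Ob_snd_out: "x \<in> Ob \<Longrightarrow> \<not> t < mA \<Longrightarrow> snd x t = (\<lambda>_. 0)"
  by (simp_all add: Ob_iff)

lemma ObI:
  assumes "\<And>t. t < mZ \<Longrightarrow> fst x t \<in> Obar (PZ t)" "\<And>t. \<not> t < mZ \<Longrightarrow> fst x t = (\<lambda>_. 0)"
    and "\<And>t. t < mA \<Longrightarrow> snd x t \<in> Obar (PA t)" "\<And>t. \<not> t < mA \<Longrightarrow> snd x t = (\<lambda>_. 0)"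
  shows "x \<in> Ob"
  unfolding Ob_iff using assms by (meson not_le)

lemma Ob_eqI:
  assumes "x \<in> Ob" "y \<in> Ob"
    and "\<And>t. t < mZ \<Longrightarrow> fst x t = fst y t" "\<And>t. t < mA \<Longrightarrow> snd x t = snd y t"
  shows "x = y"
proof -
  have "fst x t = fst y t" for t using assms Ob_fst_out by (cases "t < mZ") auto
  moreover have "snd x t = snd y t" for t using assms Ob_snd_out by (cases "t < mA") auto
  ultimately show ?thesis by (simp add: prod_eq_iff fun_eq_iff)
qed

lemma agree_refl: "agree N x x"
  and agree_sym: "agree N x y \<Longrightarrow> agree N y x"
  and agree_trans: "agree N x y \<Longrightarrow> agree N y z \<Longrightarrow> agree N x z"
  unfolding agree_def by simp_all

lemma agree_mono:
  assumes "x \<in> Ob" "y \<in> Ob" "agree N x y" "M \<le> N"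
  shows "agree M x y"
  using assms adic_base.Obar_eq_below[OF adic_base_PZ] adic_base.Obar_eq_below[OF adic_base_PA]
  unfolding agree_def by (meson Ob_fst Ob_snd)

lemma agree_0: "x \<in> Ob \<Longrightarrow> y \<in> Ob \<Longrightarrow> agree 0 x y"
  unfolding agree_def
  using adic_base.Obar_0[OF adic_base_PZ] adic_base.Obar_0[OF adic_base_PA] Ob_fst Ob_snd by metis

lemma zeroP_Ob: "zeroP \<in> Ob"
  by (rule ObI) (simp_all add: zeroP_def Obar_def)

lemma psiP_fst: "fst (psiP x) t = (if t < mZ then psiO (PZ t) (fst x t) else (\<lambda>_. 0))"
  and psiP_snd: "snd (psiP x) t = (if t < mA then psiO (PA t) (snd x t) else (\<lambda>_. 0))"
  unfolding psiP_def negP_def phiP_def psiO_def by simp_all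

lemma psiP_Ob: "x \<in> Ob \<Longrightarrow> psiP x \<in> Ob"
  by (rule ObI) (simp_all add: psiP_fst psiP_snd Ob_fst Ob_snd
      adic_base.psiO_Obar[OF adic_base_PZ] adic_base.psiO_Obar[OF adic_base_PA])

lemma psiP_agree:
  assumes "x \<in> Ob" "y \<in> Ob" "agree (Suc N) x y"
  shows "agree N (psiP x) (psiP y)"
  using assms adic_base.psiO_cong[OF adic_base_PZ] adic_base.psiO_cong[OF adic_base_PA]
  unfolding agree_def by (simp add: psiP_fst psiP_snd Ob_fst Ob_snd)

lemma scaleP_fst: "fst (scaleP k x) t = (if t < mZ then smulO (PZ t) (PZ t ^ k) (fst x t) else (\<lambda>_. 0))"
  and scaleP_snd: "snd (scaleP k x) t = (if t < mA then smulO (PA t) (PA t ^ k) (snd x t) else (\<lambda>_. 0))"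
  unfolding scaleP_def by simp_all

lemma scaleP_Ob: "x \<in> Ob \<Longrightarrow> scaleP k x \<in> Ob"
  by (rule ObI) (simp_all add: scaleP_fst scaleP_snd Ob_fst Ob_snd
      adic_base.smulO_Obar[OF adic_base_PZ] adic_base.smulO_Obar[OF adic_base_PA])

lemma scaleP_agree: "agree N x y \<Longrightarrow> agree N (scaleP k x) (scaleP k y)"
  unfolding agree_def scaleP_fst scaleP_snd smulO_def by simp

lemma scaleP_agree_zeroP: "agree k (scaleP k x) zeroP"
  unfolding agree_def scaleP_fst scaleP_snd smulO_def zeroP_def by simp

lemma scaleP_0:
  assumes "x \<in> Ob"
  shows "scaleP 0 x = x"
  using assms adic_base.Obar_mod_pow[OF adic_base_PZ] adic_base.Obar_mod_pow[OF adic_base_PA]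
  by (intro Ob_eqI scaleP_Ob) (simp_all add: scaleP_fst scaleP_snd smulO_def fun_eq_iff Ob_fst Ob_snd)

lemma fracO_fst:
  "1 \<le> n \<Longrightarrow> t < mZ \<Longrightarrow> fst (fracO n bz ba) t = periodic_expansion (PZ t) n (bz t mod (PZ t ^ n - 1))"
  and fracO_snd:
  "1 \<le> n \<Longrightarrow> t < mA \<Longrightarrow> snd (fracO n bz ba) t = periodic_expansion (PA t) n (ba t mod (PA t ^ n - 1))"
  unfolding fracP_def
  by (simp_all add: adic_base.embO_eq_periodic_expansion[OF adic_base_PZ]
      adic_base.embO_eq_periodic_expansion[OF adic_base_PA])

lemma fracO_Ob: "1 \<le> n \<Longrightarrow> fracO n bz ba \<in> Ob"
  by (rule ObI)
    (simp_all add: fracO_fst fracO_snd adic_base.periodic_expansion_Obar[OF adic_base_PZ]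
      adic_base.periodic_expansion_Obar[OF adic_base_PA], simp_all add: fracP_def)

lemma fracO_cong:
  assumes "\<And>t. t < mZ \<Longrightarrow> bz t mod (PZ t ^ n - 1) = bz' t mod (PZ t ^ n - 1)"
    and "\<And>t. t < mA \<Longrightarrow> ba t mod (PA t ^ n - 1) = ba' t mod (PA t ^ n - 1)"
  shows "fracO n bz ba = fracO n bz' ba'"
  unfolding fracP_def using assms by (simp add: prod_eq_iff fun_eq_iff)

lemma fracO_period:
  "fracO n (\<lambda>t. PZ t ^ (j + n) * az t) (\<lambda>t. PA t ^ (j + n) * aa t)
    = fracO n (\<lambda>t. PZ t ^ j * az t) (\<lambda>t. PA t ^ j * aa t)"
  by (rule fracO_cong) (simp_all add: pow_mod_pow_minus_one_period)

lemma psiP_fracO: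
  assumes n: "1 \<le> n"
  shows "psiP (fracO n (\<lambda>t. PZ t ^ Suc j * az t) (\<lambda>t. PA t ^ Suc j * aa t))
    = fracO n (\<lambda>t. PZ t ^ j * az t) (\<lambda>t. PA t ^ j * aa t)"
proof (rule Ob_eqI[OF psiP_Ob[OF fracO_Ob[OF n]] fracO_Ob[OF n]])
  fix t assume t: "t < mZ"
  have "psiO (PZ t) (periodic_expansion (PZ t) n ((PZ t ^ Suc j * az t) mod (PZ t ^ n - 1)))
      = periodic_expansion (PZ t) n ((PZ t ^ j * az t) mod (PZ t ^ n - 1))"
    by (rule adic_base.psiO_periodic_expansion[OF adic_base_PZ[OF t] n])
      (simp_all add: mod_mult_right_eq mult.assoc)
  then show "fst (psiP (fracO n (\<lambda>t. PZ t ^ Suc j * az t) (\<lambda>t. PA t ^ Suc j * aa t))) t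
      = fst (fracO n (\<lambda>t. PZ t ^ j * az t) (\<lambda>t. PA t ^ j * aa t)) t"
    using t n by (simp add: psiP_fst fracO_fst)
next
  fix t assume t: "t < mA"
  have "psiO (PA t) (periodic_expansion (PA t) n ((PA t ^ Suc j * aa t) mod (PA t ^ n - 1)))
      = periodic_expansion (PA t) n ((PA t ^ j * aa t) mod (PA t ^ n - 1))"
    by (rule adic_base.psiO_periodic_expansion[OF adic_base_PA[OF t] n])
      (simp_all add: mod_mult_right_eq mult.assoc)
  then show "snd (psiP (fracO n (\<lambda>t. PZ t ^ Suc j * az t) (\<lambda>t. PA t ^ Suc j * aa t))) t
      = snd (fracO n (\<lambda>t. PZ t ^ j * az t) (\<lambda>t. PA t ^ j * aa t)) t"
    using t n by (simp add: psiP_snd fracO_snd)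
qed

lemma fracO_zero: "fracO 1 (\<lambda>t. 0) (\<lambda>t. 0) = zeroP"
  unfolding fracP_def zeroP_def
  using adic_base.embO_eq_periodic_expansion[OF adic_base_PZ, of _ 1]
    adic_base.embO_eq_periodic_expansion[OF adic_base_PA, of _ 1]
  by (simp add: periodic_expansion_def prod_eq_iff fun_eq_iff)

definition residues :: "nat \<Rightarrow> 'f obar \<Rightarrow> (nat \<Rightarrow> int) \<times> (nat \<Rightarrow> 'f poly)" where
  "residues N x = ((\<lambda>t. fst x t N), (\<lambda>t. snd x t N))"

lemma residues_eq_iff_agree:
  assumes "x \<in> Ob" "y \<in> Ob"
  shows "residues N x = residues N y \<longleftrightarrow> agree N x y"
proof -
  have "fst x t N = fst y t N" if "\<not> t < mZ" for t
    using Ob_fst_out[OF assms(1) that] Ob_fst_out[OF assms(2) that] by simp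
  then have "(\<forall>t. fst x t N = fst y t N) \<longleftrightarrow> (\<forall>t<mZ. fst x t N = fst y t N)" by blast
  moreover have "snd x t N = snd y t N" if "\<not> t < mA" for t
    using Ob_snd_out[OF assms(1) that] Ob_snd_out[OF assms(2) that] by simp
  then have "(\<forall>t. snd x t N = snd y t N) \<longleftrightarrow> (\<forall>t<mA. snd x t N = snd y t N)" by blast
  ultimately show ?thesis unfolding residues_def agree_def by (simp add: fun_eq_iff)
qed

lemma finite_residues: "finite (residues N ` Ob)"
proof -
  define BZ where "BZ = (\<Union>t<mZ. {a. a mod PZ t ^ N = a})"
  define BA where "BA = (\<Union>t<mA. {a. a mod PA t ^ N = a})"
  define SZ where "SZ = {f. \<forall>t. (t \<in> {..<mZ} \<longrightarrow> f t \<in> BZ) \<and> (t \<notin> {..<mZ} \<longrightarrow> f t = 0)}"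
  define SA where "SA = {f. \<forall>t. (t \<in> {..<mA} \<longrightarrow> f t \<in> BA) \<and> (t \<notin> {..<mA} \<longrightarrow> f t = 0)}"
  have "finite BZ" unfolding BZ_def using adic_base.finite_reduced[OF adic_base_PZ] by blast
  moreover have "finite BA" unfolding BA_def using adic_base.finite_reduced[OF adic_base_PA] by blast
  ultimately have "finite (SZ \<times> SA)"
    unfolding SZ_def SA_def by (intro finite_cartesian_product finite_set_of_finite_funs) simp_all
  moreover have "residues N ` Ob \<subseteq> SZ \<times> SA"
  proof (rule image_subsetI)
    fix x assume x: "x \<in> Ob"
    have "fst x t N \<in> BZ" if "t < mZ" for t
      using adic_base.Obar_mod_pow[OF adic_base_PZ[OF that] Ob_fst[OF x that]] that
      unfolding BZ_def by blast
    moreover have "snd x t N \<in> BA" if "t < mA" for t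
      using adic_base.Obar_mod_pow[OF adic_base_PA[OF that] Ob_snd[OF x that]] that
      unfolding BA_def by blast
    ultimately show "residues N x \<in> SZ \<times> SA"
      unfolding residues_def SZ_def SA_def using Ob_fst_out[OF x] Ob_snd_out[OF x] by auto
  qed
  ultimately show ?thesis by (rule finite_subset[rotated])
qed

lemma coherent_seq_limit:
  assumes s_Ob: "\<And>N. s N \<in> Ob" and coherent: "\<And>N. agree N (s (Suc N)) (s N)"
  shows "\<exists>z\<in>Ob. \<forall>N. agree N z (s N)"
proof
  define z where "z = ((\<lambda>t k. fst (s k) t k), (\<lambda>t k. snd (s k) t k))"
  show "\<forall>N. agree N z (s N)" unfolding z_def agree_def by simp
  show "z \<in> Ob"
  proof (rule ObI)
    fix t assume t: "t < mZ"
    have "fst (s k) t k = fst (s (Suc k)) t (Suc k) mod PZ t ^ k" for k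
      using adic_base.Obar_truncate[OF adic_base_PZ[OF t] Ob_fst[OF s_Ob[of "Suc k"] t], of k "Suc k"]
        coherent[of k] t unfolding agree_def by simp
    then have "\<forall>k. fst (s k) t k = fst (s (Suc k)) t (Suc k) mod PZ t ^ k" ..
    then show "fst z t \<in> Obar (PZ t)" unfolding z_def Obar_def fst_conv mem_Collect_eq .
  next
    fix t assume t: "t < mA"
    have "snd (s k) t k = snd (s (Suc k)) t (Suc k) mod PA t ^ k" for k
      using adic_base.Obar_truncate[OF adic_base_PA[OF t] Ob_snd[OF s_Ob[of "Suc k"] t], of k "Suc k"]
        coherent[of k] t unfolding agree_def by simp
    then have "\<forall>k. snd (s k) t k = snd (s (Suc k)) t (Suc k) mod PA t ^ k" ..
    then show "snd z t \<in> Obar (PA t)" unfolding z_def Obar_def snd_conv mem_Collect_eq .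
  next
    fix t assume "\<not> t < mZ"
    then show "fst z t = (\<lambda>_. 0)" unfolding z_def using Ob_fst_out[OF s_Ob] by auto
  next
    fix t assume "\<not> t < mA"
    then show "snd z t = (\<lambda>_. 0)" unfolding z_def using Ob_snd_out[OF s_Ob] by auto
  qed
qed

text \<open>Compactness of the product, in the form of Koenig's lemma.\<close>
lemma uniform_level:
  assumes inv: "\<And>x y N. x \<in> Ob \<Longrightarrow> y \<in> Ob \<Longrightarrow> agree N x y \<Longrightarrow> P x N \<Longrightarrow> P y N"
    and mono: "\<And>x N. x \<in> Ob \<Longrightarrow> P x N \<Longrightarrow> P x (Suc N)"
    and ex: "\<And>x. x \<in> Ob \<Longrightarrow> \<exists>N. P x N"
  shows "\<exists>N. \<forall>x\<in>Ob. P x N"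
proof (rule ccontr)
  assume not_uniform: "\<not> (\<exists>N. \<forall>x\<in>Ob. P x N)"
  have mono_le: "P x M" if "x \<in> Ob" "P x N" "N \<le> M" for x N M
    using that(3,2) by (induction M rule: dec_induct) (use mono[OF that(1)] in auto)
  define bad where "bad x N \<longleftrightarrow> (\<forall>M\<ge>N. \<exists>y\<in>Ob. agree N y x \<and> \<not> P y M)" for x N
  have step: "\<exists>x'\<in>Ob. agree N x' x \<and> bad x' (Suc N)" if "bad x N" for x N
  proof (rule ccontr)
    assume no_bad: "\<not> (\<exists>x'\<in>Ob. agree N x' x \<and> bad x' (Suc N))"
    define Ks where "Ks = residues (Suc N) ` {x' \<in> Ob. agree N x' x}"
    have fin: "finite Ks" unfolding Ks_def by (rule finite_subset[OF _ finite_residues]) auto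
    have "\<forall>k\<in>Ks. \<exists>M. \<forall>y\<in>Ob. residues (Suc N) y = k \<longrightarrow> P y M"
    proof
      fix k assume "k \<in> Ks"
      then obtain x' where x': "x' \<in> Ob" "agree N x' x" "k = residues (Suc N) x'"
        unfolding Ks_def by blast
      then obtain M where "\<forall>y\<in>Ob. agree (Suc N) y x' \<longrightarrow> P y M"
        using no_bad unfolding bad_def by blast
      then show "\<exists>M. \<forall>y\<in>Ob. residues (Suc N) y = k \<longrightarrow> P y M"
        using residues_eq_iff_agree x' by blast
    qed
    then obtain f where f: "\<forall>k\<in>Ks. \<forall>y\<in>Ob. residues (Suc N) y = k \<longrightarrow> P y (f k)"
      by (rule bchoice[THEN exE])
    have "N \<le> Max (insert N (f ` Ks))" using fin by simp
    then obtain y where y: "y \<in> Ob" "agree N y x" "\<not> P y (Max (insert N (f ` Ks)))"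
      using \<open>bad x N\<close> unfolding bad_def by blast
    then have k: "residues (Suc N) y \<in> Ks" unfolding Ks_def by blast
    then have "P y (f (residues (Suc N) y))" using f y(1) by blast
    moreover have "f (residues (Suc N) y) \<le> Max (insert N (f ` Ks))" using fin k by simp
    ultimately show False using mono_le y(1,3) by blast
  qed
  have "\<exists>s. \<forall>N. (s N \<in> Ob \<and> bad (s N) N) \<and> agree N (s (Suc N)) (s N)"
  proof (rule dependent_nat_choice)
    show "\<exists>x. x \<in> Ob \<and> bad x 0" unfolding bad_def using not_uniform agree_0 zeroP_Ob by blast
  next
    fix x N assume "x \<in> Ob \<and> bad x N"
    then obtain x' where "x' \<in> Ob" "agree N x' x" "bad x' (Suc N)" using step by blast
    then show "\<exists>y. (y \<in> Ob \<and> bad y (Suc N)) \<and> agree N y x" by blast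
  qed
  then obtain s where s: "\<And>N. s N \<in> Ob" "\<And>N. bad (s N) N" "\<And>N. agree N (s (Suc N)) (s N)"
    by blast
  obtain z where z: "z \<in> Ob" "\<And>N. agree N z (s N)" using coherent_seq_limit[OF s(1,3)] by blast
  obtain N where "P z N" using ex[OF z(1)] by blast
  obtain y where y: "y \<in> Ob" "agree N y (s N)" "\<not> P y N" using s(2)[of N] unfolding bad_def by blast
  have "agree N z y" using agree_trans[OF z(2) agree_sym[OF y(2)]] .
  then show False using inv[OF z(1) y(1) _ \<open>P z N\<close>] y(3) by blast
qed

abbreviation orbit :: "nat \<Rightarrow> (nat \<Rightarrow> int) \<Rightarrow> (nat \<Rightarrow> 'f poly) \<Rightarrow> nat \<Rightarrow> 'f obar" where
  "orbit n az aa j \<equiv> fracO n (\<lambda>t. PZ t ^ j * az t) (\<lambda>t. PA t ^ j * aa t)"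

definition admissible :: "nat \<Rightarrow> (nat \<Rightarrow> int) \<Rightarrow> (nat \<Rightarrow> 'f poly) \<Rightarrow> bool" where
  "admissible n az aa \<longleftrightarrow>
     (\<forall>t<mZ. 0 \<le> az t \<and> az t < PZ t ^ n - 1) \<and> (\<forall>t<mA. degree (aa t) < degree (PA t ^ n - 1))"

definition orbit_prod_one :: "('f obar \<Rightarrow> 'a::comm_monoid_mult) \<Rightarrow> bool" where
  "orbit_prod_one R \<longleftrightarrow>
     (\<forall>n\<ge>1. \<forall>az aa. admissible n az aa \<longrightarrow> (\<Prod>j<n. R (orbit n az aa j)) = 1)"

lemma orbit_Ob: "1 \<le> n \<Longrightarrow> orbit n az aa j \<in> Ob"
  by (rule fracO_Ob)

lemma orbit_period: "orbit n az aa (j + n) = orbit n az aa j"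
  by (rule fracO_period)

lemma psiP_orbit_Suc: "1 \<le> n \<Longrightarrow> psiP (orbit n az aa (Suc j)) = orbit n az aa j"
  by (rule psiP_fracO)

lemma prod_orbit_shift: "(\<Prod>j<n. R (orbit n az aa (j + s))) = (\<Prod>j<n. R (orbit n az aa j))"
  by (rule prod_lessThan_periodic_shift) (simp add: orbit_period)

lemma orbit_prod_one_reduced:
  assumes R: "orbit_prod_one R" and n: "1 \<le> n"
    and az: "\<And>t. t < mZ \<Longrightarrow> az t mod (PZ t ^ n - 1) = az t"
    and aa: "\<And>t. t < mA \<Longrightarrow> aa t mod (PA t ^ n - 1) = aa t"
  shows "(\<Prod>j<n. R (orbit n az aa j)) = 1"
proof -
  have "admissible n az aa"
    unfolding admissible_def
    using az aa int_reduced_iff[OF int_pow_minus_one_pos[OF PZ_ge_2 n]]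
      poly_reduced_degree_less[OF _ PA_degree n] by blast
  then show ?thesis using R n unfolding orbit_prod_one_def by blast
qed

lemma orbit_prod_one_zeroP:
  assumes "orbit_prod_one R"
  shows "R zeroP = 1"
  using orbit_prod_one_reduced[OF assms order.refl, of "\<lambda>_. 0" "\<lambda>_. 0"] fracO_zero by simp

definition truncZ :: "'f obar \<Rightarrow> nat \<Rightarrow> nat \<Rightarrow> int" where
  "truncZ x L t = neg_trunc (PZ t) (fst x t) L"

definition truncA :: "'f obar \<Rightarrow> nat \<Rightarrow> nat \<Rightarrow> 'f poly" where
  "truncA x L t = neg_trunc (PA t) (snd x t) L"

lemma scaleP_agree_orbit_trunc:
  assumes x: "x \<in> Ob" and "1 \<le> K" "i \<le> K" and N: "N \<le> Suc L"
  shows "agree N (scaleP i x) (orbit (K + L + 1) (truncZ x L) (truncA x L) i)"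
  unfolding agree_def scaleP_fst scaleP_snd truncZ_def truncA_def
  using assms adic_base.smulO_eq_neg_trunc[OF adic_base_PZ Ob_fst[OF x] N]
    adic_base.smulO_eq_neg_trunc[OF adic_base_PA Ob_snd[OF x] N]
    adic_base.periodic_expansion_neg_trunc[OF adic_base_PZ Ob_fst[OF x]]
    adic_base.periodic_expansion_neg_trunc[OF adic_base_PA Ob_snd[OF x]]
  by (simp add: fracO_fst fracO_snd)

lemma scaleP_psiP_agree_orbit_trunc_div:
  assumes x: "x \<in> Ob" and "1 \<le> K" "i \<le> K" and N: "N \<le> L"
  shows "agree N (scaleP i (psiP x))
    (orbit (K + L) (\<lambda>t. truncZ x L t div PZ t) (\<lambda>t. truncA x L t div PA t) i)"
  unfolding agree_def scaleP_fst scaleP_snd psiP_fst psiP_snd truncZ_def truncA_def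
  using assms adic_base.smulO_psiO_eq_neg_trunc[OF adic_base_PZ Ob_fst[OF x] N]
    adic_base.smulO_psiO_eq_neg_trunc[OF adic_base_PA Ob_snd[OF x] N]
    adic_base.periodic_expansion_neg_trunc_div[OF adic_base_PZ Ob_fst[OF x]]
    adic_base.periodic_expansion_neg_trunc_div[OF adic_base_PA Ob_snd[OF x]]
  by (simp add: fracO_fst fracO_snd)

lemma orbit_trunc_agree_orbit_trunc_div:
  assumes x: "x \<in> Ob" and "1 \<le> K" "1 \<le> j" "j \<le> L" "N \<le> K"
  shows "agree N (orbit (K + L + 1) (truncZ x L) (truncA x L) (K + j))
    (orbit (K + L) (\<lambda>t. truncZ x L t div PZ t) (\<lambda>t. truncA x L t div PA t) (K + j))"
  unfolding agree_def truncZ_def truncA_def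
  using assms adic_base.periodic_expansion_neg_trunc_rotated[OF adic_base_PZ Ob_fst[OF x]]
    adic_base.periodic_expansion_neg_trunc_rotated[OF adic_base_PA Ob_snd[OF x]]
    adic_base.periodic_expansion_neg_trunc_div_rotated[OF adic_base_PZ Ob_fst[OF x]]
    adic_base.periodic_expansion_neg_trunc_div_rotated[OF adic_base_PA Ob_snd[OF x]]
  by (simp add: fracO_fst fracO_snd)

lemma prod_orbit_trunc:
  assumes R: "orbit_prod_one R" and x: "x \<in> Ob" and "1 \<le> K"
  shows "(\<Prod>i<Suc K. R (orbit (K + L + 1) (truncZ x L) (truncA x L) i))
    * (\<Prod>j<L. R (orbit (K + L + 1) (truncZ x L) (truncA x L) (Suc K + j))) = 1"
proof -
  have "(\<Prod>j<K + L + 1. R (orbit (K + L + 1) (truncZ x L) (truncA x L) j)) = 1"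
  proof (rule orbit_prod_one_reduced[OF R])
    fix t
    show "truncZ x L t mod (PZ t ^ (K + L + 1) - 1) = truncZ x L t" if t: "t < mZ"
      unfolding truncZ_def using \<open>1 \<le> K\<close>
      by (intro adic_base.reduced_pow_minus_one[OF adic_base_PZ[OF t]
          adic_base.neg_trunc_reduced[OF adic_base_PZ[OF t] Ob_fst[OF x t]]]) simp
    show "truncA x L t mod (PA t ^ (K + L + 1) - 1) = truncA x L t" if t: "t < mA"
      unfolding truncA_def using \<open>1 \<le> K\<close>
      by (intro adic_base.reduced_pow_minus_one[OF adic_base_PA[OF t]
          adic_base.neg_trunc_reduced[OF adic_base_PA[OF t] Ob_snd[OF x t]]]) simp
  qed simp
  then show ?thesis
    using prod_lessThan_add[of "\<lambda>j. R (orbit (K + L + 1) (truncZ x L) (truncA x L) j)" "Suc K" L]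
    by simp
qed

lemma prod_orbit_trunc_div:
  assumes R: "orbit_prod_one R" and x: "x \<in> Ob" and "1 \<le> K"
  shows "(\<Prod>i<K. R (orbit (K + L) (\<lambda>t. truncZ x L t div PZ t) (\<lambda>t. truncA x L t div PA t) (Suc i)))
    * (\<Prod>j<L. R (orbit (K + L) (\<lambda>t. truncZ x L t div PZ t) (\<lambda>t. truncA x L t div PA t) (Suc K + j)))
    = 1"
proof -
  have "(\<Prod>j<K + L. R (orbit (K + L) (\<lambda>t. truncZ x L t div PZ t) (\<lambda>t. truncA x L t div PA t) j)) = 1"
  proof (rule orbit_prod_one_reduced[OF R])
    fix t
    show "truncZ x L t div PZ t mod (PZ t ^ (K + L) - 1) = truncZ x L t div PZ t" if t: "t < mZ"
      unfolding truncZ_def using \<open>1 \<le> K\<close>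
      by (intro adic_base.reduced_pow_minus_one[OF adic_base_PZ[OF t]
          adic_base.neg_trunc_div_reduced[OF adic_base_PZ[OF t] Ob_fst[OF x t]]]) simp
    show "truncA x L t div PA t mod (PA t ^ (K + L) - 1) = truncA x L t div PA t" if t: "t < mA"
      unfolding truncA_def using \<open>1 \<le> K\<close>
      by (intro adic_base.reduced_pow_minus_one[OF adic_base_PA[OF t]
          adic_base.neg_trunc_div_reduced[OF adic_base_PA[OF t] Ob_snd[OF x t]]]) simp
  qed (use \<open>1 \<le> K\<close> in simp)
  then have "(\<Prod>j<K + L. R (orbit (K + L) (\<lambda>t. truncZ x L t div PZ t) (\<lambda>t. truncA x L t div PA t) (j + 1))) = 1"
    using prod_orbit_shift[where R = R and n = "K + L" and s = 1
        and az = "\<lambda>t. truncZ x L t div PZ t" and aa = "\<lambda>t. truncA x L t div PA t"] by simp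
  then show ?thesis unfolding prod_lessThan_add by simp
qed

end

section \<open>Coboundaries\<close>

locale obar_functions = nonarch_abs absv + obar_product mZ mA PZ PA
  for absv :: "'k::field \<Rightarrow> real" and mZ mA :: nat
    and PZ :: "nat \<Rightarrow> int" and PA :: "nat \<Rightarrow> 'f::{field,finite} poly"
begin

abbreviation cont :: "('f obar \<Rightarrow> 'k) \<Rightarrow> bool" where
  "cont \<equiv> contP mZ mA PZ PA absv"

abbreviation nonvanishing :: "('f obar \<Rightarrow> 'k) \<Rightarrow> bool" where
  "nonvanishing \<equiv> nonvanishingP mZ mA PZ PA"

lemma cont_iff: "cont F \<longleftrightarrow> (\<forall>x\<in>Ob. \<forall>e>0. \<exists>N. \<forall>y\<in>Ob. agree N y x \<longrightarrow> absv (F y - F x) < e)"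
  unfolding contP_def agree_def by simp

lemma nonvanishingD: "nonvanishing F \<Longrightarrow> x \<in> Ob \<Longrightarrow> F x \<noteq> 0"
  unfolding nonvanishingP_def by blast

lemma cont_iff_ratio:
  assumes nv: "nonvanishing F"
  shows "cont F \<longleftrightarrow> (\<forall>x\<in>Ob. \<forall>e>0. \<exists>N. \<forall>y\<in>Ob. agree N y x \<longrightarrow> near_one e (F y / F x))"
proof (intro iffI ballI allI impI)
  fix x e assume "cont F" "x \<in> Ob" "(0::real) < e"
  moreover have "0 < absv (F x)" using absv_pos nonvanishingD[OF nv \<open>x \<in> Ob\<close>] by blast
  ultimately obtain N where "\<forall>y\<in>Ob. agree N y x \<longrightarrow> absv (F y - F x) < e * absv (F x)"
    unfolding cont_iff by (meson mult_pos_pos)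
  then show "\<exists>N. \<forall>y\<in>Ob. agree N y x \<longrightarrow> near_one e (F y / F x)"
    using near_one_divide_iff[OF nonvanishingD[OF nv \<open>x \<in> Ob\<close>]] by blast
next
  assume ratio: "\<forall>x\<in>Ob. \<forall>e>0. \<exists>N. \<forall>y\<in>Ob. agree N y x \<longrightarrow> near_one e (F y / F x)"
  show "cont F" unfolding cont_iff
  proof (intro ballI allI impI)
    fix x e assume x: "x \<in> Ob" and e: "(0::real) < e"
    have pos: "0 < absv (F x)" using absv_pos nonvanishingD[OF nv x] by blast
    then obtain N where "\<forall>y\<in>Ob. agree N y x \<longrightarrow> near_one (e / absv (F x)) (F y / F x)"
      using ratio x e by (meson divide_pos_pos)
    then have "\<forall>y\<in>Ob. agree N y x \<longrightarrow> absv (F y - F x) < e"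
      using near_one_divide_iff[OF nonvanishingD[OF nv x]] nonvanishingD[OF nv x] pos by simp
    then show "\<exists>N. \<forall>y\<in>Ob. agree N y x \<longrightarrow> absv (F y - F x) < e" by blast
  qed
qed

lemma nonvanishing_mult: "nonvanishing F \<Longrightarrow> nonvanishing G \<Longrightarrow> nonvanishing (\<lambda>x. F x * G x)"
  and nonvanishing_inverse: "nonvanishing F \<Longrightarrow> nonvanishing (\<lambda>x. inverse (F x))"
  and nonvanishing_psiP: "nonvanishing F \<Longrightarrow> nonvanishing (\<lambda>x. F (psiP x))"
  unfolding nonvanishingP_def by (simp_all add: psiP_Ob)

lemma nonvanishing_cong: "(\<And>x. x \<in> Ob \<Longrightarrow> F x = F' x) \<Longrightarrow> nonvanishing F \<longleftrightarrow> nonvanishing F'"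
  unfolding nonvanishingP_def by auto

lemma cont_cong: "(\<And>x. x \<in> Ob \<Longrightarrow> F x = F' x) \<Longrightarrow> cont F \<longleftrightarrow> cont F'"
  unfolding cont_iff by (metis (no_types, lifting))

lemma cont_mult:
  assumes "nonvanishing F" "nonvanishing G" "cont F" "cont G"
  shows "cont (\<lambda>x. F x * G x)"
  unfolding cont_iff_ratio[OF nonvanishing_mult[OF assms(1,2)]]
proof (intro ballI allI impI)
  fix x e assume x: "x \<in> Ob" and e: "(0::real) < e"
  define e' where "e' = min e 1"
  have e': "0 < e'" "e' \<le> 1" "e' \<le> e" unfolding e'_def using e by auto
  obtain N1 where N1: "\<forall>y\<in>Ob. agree N1 y x \<longrightarrow> near_one e' (F y / F x)"
    using assms(3) x e' unfolding cont_iff_ratio[OF assms(1)] by blast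
  obtain N2 where N2: "\<forall>y\<in>Ob. agree N2 y x \<longrightarrow> near_one e' (G y / G x)"
    using assms(4) x e' unfolding cont_iff_ratio[OF assms(2)] by blast
  have "near_one e (F y * G y / (F x * G x))" if "y \<in> Ob" "agree (max N1 N2) y x" for y
  proof -
    have "near_one e' (F y / F x)" "near_one e' (G y / G x)"
      using N1 N2 agree_mono[OF that(1) x that(2)] that(1) by simp_all
    then have "near_one e' ((F y / F x) * (G y / G x))" using near_one_mult e' by blast
    then show ?thesis using near_one_mono e' by simp
  qed
  then show "\<exists>N. \<forall>y\<in>Ob. agree N y x \<longrightarrow> near_one e (F y * G y / (F x * G x))" by blast
qed

lemma cont_inverse:
  assumes "nonvanishing F" "cont F"
  shows "cont (\<lambda>x. inverse (F x))"
  unfolding cont_iff_ratio[OF nonvanishing_inverse[OF assms(1)]]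
proof (intro ballI allI impI)
  fix x e assume x: "x \<in> Ob" and e: "(0::real) < e"
  define e' where "e' = min e 1"
  have e': "0 < e'" "e' \<le> 1" "e' \<le> e" unfolding e'_def using e by auto
  obtain N where N: "\<forall>y\<in>Ob. agree N y x \<longrightarrow> near_one e' (F y / F x)"
    using assms(2) x e' unfolding cont_iff_ratio[OF assms(1)] by blast
  have "near_one e (inverse (F y) / inverse (F x))" if "y \<in> Ob" "agree N y x" for y
  proof -
    have "near_one e' (inverse (F y / F x))" using N that near_one_inverse e' by blast
    then show ?thesis using near_one_mono e' by (simp add: divide_inverse mult.commute)
  qed
  then show "\<exists>N. \<forall>y\<in>Ob. agree N y x \<longrightarrow> near_one e (inverse (F y) / inverse (F x))" by blast
qed

lemma cont_psiP:
  assumes "nonvanishing F" "cont F"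
  shows "cont (\<lambda>x. F (psiP x))"
  unfolding cont_iff_ratio[OF nonvanishing_psiP[OF assms(1)]]
proof (intro ballI allI impI)
  fix x e assume x: "x \<in> Ob" and e: "(0::real) < e"
  obtain N where "\<forall>y\<in>Ob. agree N y (psiP x) \<longrightarrow> near_one e (F y / F (psiP x))"
    using assms(2) psiP_Ob[OF x] e unfolding cont_iff_ratio[OF assms(1)] by blast
  then have "\<forall>y\<in>Ob. agree (Suc N) y x \<longrightarrow> near_one e (F (psiP y) / F (psiP x))"
    using psiP_agree psiP_Ob x by blast
  then show "\<exists>N. \<forall>y\<in>Ob. agree N y x \<longrightarrow> near_one e (F (psiP y) / F (psiP x))" by blast
qed

lemma uniformly_cont_ratio:
  assumes nv: "nonvanishing F" and cont: "cont F" and e: "0 < e"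
  shows "\<exists>N. \<forall>x\<in>Ob. \<forall>y\<in>Ob. agree N x y \<longrightarrow> near_one e (F x / F y)"
proof -
  define e' where "e' = min e 1"
  have e': "0 < e'" "e' \<le> 1" "e' \<le> e" unfolding e'_def using e by auto
  define P where
    "P x N \<longleftrightarrow> (\<forall>y\<in>Ob. \<forall>z\<in>Ob. agree N y x \<longrightarrow> agree N z x \<longrightarrow> near_one e' (F y / F z))" for x N
  have "\<exists>N. \<forall>x\<in>Ob. P x N"
  proof (rule uniform_level)
    fix x y N assume "agree N x y" "P x N"
    then show "P y N" unfolding P_def using agree_sym agree_trans by blast
  next
    fix x N assume "x \<in> Ob" "P x N"
    then show "P x (Suc N)" unfolding P_def using agree_mono[OF _ \<open>x \<in> Ob\<close>, of _ "Suc N" N] by auto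
  next
    fix x assume x: "x \<in> Ob"
    obtain N where N: "\<forall>y\<in>Ob. agree N y x \<longrightarrow> near_one e' (F y / F x)"
      using cont x e' unfolding cont_iff_ratio[OF nv] by blast
    have "near_one e' (F y / F z)" if "y \<in> Ob" "z \<in> Ob" "agree N y x" "agree N z x" for y z
    proof -
      have "near_one e' ((F y / F x) / (F z / F x))" using N that near_one_divide e' by blast
      then show ?thesis using nonvanishingD[OF nv x] by simp
    qed
    then show "\<exists>N. P x N" unfolding P_def by blast
  qed
  then obtain N where "\<forall>x\<in>Ob. P x N" by blast
  then have "\<forall>x\<in>Ob. \<forall>y\<in>Ob. agree N x y \<longrightarrow> near_one e' (F x / F y)"
    unfolding P_def using agree_refl by blast
  then show ?thesis using near_one_mono e' by blast
qed

lemma near_one_prod_agree: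
  assumes e: "0 < e" "e \<le> 1"
    and uc: "\<forall>y\<in>Ob. \<forall>z\<in>Ob. agree N y z \<longrightarrow> near_one e (R y / R z)"
    and "\<And>i. i \<in> S \<Longrightarrow> agree N (f i) (g i)" "\<And>i. i \<in> S \<Longrightarrow> f i \<in> Ob" "\<And>i. i \<in> S \<Longrightarrow> g i \<in> Ob"
  shows "near_one e ((\<Prod>i\<in>S. R (f i)) / (\<Prod>i\<in>S. R (g i)))"
  unfolding prod_dividef[symmetric] using e by (intro near_one_prod) (use assms in blast)+

lemma near_one_scaleP_prods:
  assumes x: "x \<in> Ob" and R: "orbit_prod_one R"
    and "1 \<le> K" "1 \<le> L" "N \<le> K" "N \<le> L" and e: "0 < e" "e \<le> 1"
    and uc: "\<forall>y\<in>Ob. \<forall>z\<in>Ob. agree N y z \<longrightarrow> near_one e (R y / R z)"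
  shows "near_one e ((\<Prod>i<Suc K. R (scaleP i x)) / (\<Prod>i<K. R (scaleP (Suc i) (psiP x))))"
proof -
  define p q where "p = orbit (K + L + 1) (truncZ x L) (truncA x L)"
    and "q = orbit (K + L) (\<lambda>t. truncZ x L t div PZ t) (\<lambda>t. truncA x L t div PA t)"
  have p_Ob: "p i \<in> Ob" and q_Ob: "q i \<in> Ob" for i
    unfolding p_def q_def using \<open>1 \<le> K\<close> by (simp_all add: orbit_Ob)
  define A B C D where "A = (\<Prod>i<Suc K. R (p i))" and "B = (\<Prod>j<L. R (p (Suc K + j)))"
    and "C = (\<Prod>i<K. R (q (Suc i)))" and "D = (\<Prod>j<L. R (q (Suc K + j)))"
  have AB: "A * B = 1" and CD: "C * D = 1"
    unfolding A_def B_def C_def D_def p_def q_def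
    using prod_orbit_trunc[OF R x \<open>1 \<le> K\<close>] prod_orbit_trunc_div[OF R x \<open>1 \<le> K\<close>] by simp_all
  have "near_one e ((\<Prod>i<Suc K. R (scaleP i x)) / A)"
    unfolding A_def
  proof (rule near_one_prod_agree[OF e uc])
    fix i assume "i \<in> {..<Suc K}"
    then show "agree N (scaleP i x) (p i)"
      unfolding p_def using scaleP_agree_orbit_trunc[OF x \<open>1 \<le> K\<close>] \<open>N \<le> L\<close> by simp
  qed (simp_all add: scaleP_Ob x p_Ob)
  moreover have "near_one e (C / (\<Prod>i<K. R (scaleP (Suc i) (psiP x))))"
    unfolding C_def
  proof (rule near_one_prod_agree[OF e uc])
    fix i assume "i \<in> {..<K}"
    then have "agree N (scaleP (Suc i) (psiP x)) (q (Suc i))"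
      unfolding q_def
      by (intro scaleP_psiP_agree_orbit_trunc_div[OF x \<open>1 \<le> K\<close>]) (use \<open>N \<le> L\<close> in simp_all)
    then show "agree N (q (Suc i)) (scaleP (Suc i) (psiP x))" by (rule agree_sym)
  qed (simp_all add: scaleP_Ob psiP_Ob x q_Ob)
  moreover have "near_one e (D / B)"
    unfolding B_def D_def
  proof (rule near_one_prod_agree[OF e uc])
    fix j assume "j \<in> {..<L}"
    then have "agree N (p (K + Suc j)) (q (K + Suc j))"
      unfolding p_def q_def
      by (intro orbit_trunc_agree_orbit_trunc_div[OF x \<open>1 \<le> K\<close>]) (use \<open>N \<le> K\<close> in simp_all)
    then show "agree N (q (Suc K + j)) (p (Suc K + j))" using agree_sym by simp
  qed (simp_all add: p_Ob q_Ob)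
  ultimately have "near_one e ((\<Prod>i<Suc K. R (scaleP i x)) / A
      * (C / (\<Prod>i<K. R (scaleP (Suc i) (psiP x)))) * (D / B))"
    using near_one_mult e by blast
  moreover have "P / A * (C / Q) * (D / B) = (P * (C * D)) / (Q * (A * B))" for P Q
    by (simp add: times_divide_times_eq ac_simps)
  ultimately show ?thesis using AB CD by simp
qed

definition tail_prod :: "('f obar \<Rightarrow> 'k) \<Rightarrow> nat \<Rightarrow> 'f obar \<Rightarrow> 'k" where
  "tail_prod R K x = (\<Prod>i<K. R (scaleP (Suc i) x))"

definition tail_limit :: "('f obar \<Rightarrow> 'k) \<Rightarrow> 'f obar \<Rightarrow> 'k" where
  "tail_limit R x = (SOME L. L \<noteq> 0 \<and> (\<forall>e>0. \<exists>N. \<forall>K\<ge>N. near_one e (L / tail_prod R K x)))"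

context
  fixes R :: "'f obar \<Rightarrow> 'k"
  assumes nv: "nonvanishing R" and cont: "cont R" and one: "orbit_prod_one R"
begin

lemma tail_prod_nonzero: "x \<in> Ob \<Longrightarrow> tail_prod R K x \<noteq> 0"
  unfolding tail_prod_def using nonvanishingD[OF nv] scaleP_Ob by simp

text \<open>The factors \<open>R (\<pi>^i x)\<close> tend to \<open>R 0 = 1\<close> uniformly in \<open>x\<close>.\<close>
lemma tail_prod_cauchy:
  assumes e: "0 < e"
  shows "\<exists>N. \<forall>x\<in>Ob. \<forall>K K'. N \<le> K \<longrightarrow> K \<le> K' \<longrightarrow> near_one e (tail_prod R K' x / tail_prod R K x)"
proof -
  define e' where "e' = min e 1"
  have e': "0 < e'" "e' \<le> 1" "e' \<le> e" unfolding e'_def using e by auto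
  obtain N where N: "\<forall>x\<in>Ob. \<forall>y\<in>Ob. agree N x y \<longrightarrow> near_one e' (R x / R y)"
    using uniformly_cont_ratio[OF nv cont e'(1)] by blast
  have "near_one e (tail_prod R K' x / tail_prod R K x)" if x: "x \<in> Ob" and K: "N \<le> K" "K \<le> K'" for x K K'
  proof -
    have "tail_prod R K' x / tail_prod R K x = (\<Prod>j<K' - K. R (scaleP (Suc (K + j)) x))"
      unfolding tail_prod_def using prod_lessThan_add[of "\<lambda>i. R (scaleP (Suc i) x)" K "K' - K"] K
        tail_prod_nonzero[OF x, of K] by (simp add: tail_prod_def)
    moreover have "near_one e' (\<Prod>j<K' - K. R (scaleP (Suc (K + j)) x))"
    proof (rule near_one_prod[OF e'(1,2)])
      fix j
      have "agree N (scaleP (Suc (K + j)) x) zeroP"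
        using agree_mono[OF scaleP_Ob[OF x] zeroP_Ob scaleP_agree_zeroP] K by simp
      then show "near_one e' (R (scaleP (Suc (K + j)) x))"
        using N scaleP_Ob[OF x] zeroP_Ob orbit_prod_one_zeroP[OF one] by fastforce
    qed
    ultimately show ?thesis using near_one_mono e' by simp
  qed
  then show ?thesis by blast
qed

lemma tail_limit:
  assumes "x \<in> Ob"
  shows "tail_limit R x \<noteq> 0" and "\<forall>e>0. \<exists>N. \<forall>K\<ge>N. near_one e (tail_limit R x / tail_prod R K x)"
proof -
  have "\<exists>L. L \<noteq> 0 \<and> (\<forall>e>0. \<exists>N. \<forall>K\<ge>N. near_one e (L / tail_prod R K x))"
    using tail_prod_nonzero[OF assms] tail_prod_cauchy assms by (intro ratio_cauchy_limit) blast+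
  then have "tail_limit R x \<noteq> 0 \<and> (\<forall>e>0. \<exists>N. \<forall>K\<ge>N. near_one e (tail_limit R x / tail_prod R K x))"
    unfolding tail_limit_def by (rule someI_ex)
  then show "tail_limit R x \<noteq> 0" and "\<forall>e>0. \<exists>N. \<forall>K\<ge>N. near_one e (tail_limit R x / tail_prod R K x)"
    by blast+
qed

lemma tail_limit_uniform:
  assumes e: "0 < e"
  shows "\<exists>N. \<forall>x\<in>Ob. \<forall>K\<ge>N. near_one e (tail_limit R x / tail_prod R K x)"
proof -
  define e' where "e' = min e 1"
  have e': "0 < e'" "e' \<le> 1" "e' \<le> e" unfolding e'_def using e by auto
  obtain N where N: "\<forall>x\<in>Ob. \<forall>K K'. N \<le> K \<longrightarrow> K \<le> K' \<longrightarrow> near_one e' (tail_prod R K' x / tail_prod R K x)"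
    using tail_prod_cauchy[OF e'(1)] by blast
  have "near_one e (tail_limit R x / tail_prod R K x)" if x: "x \<in> Ob" and K: "N \<le> K" for x K
  proof -
    obtain Nx where "\<forall>K\<ge>Nx. near_one e' (tail_limit R x / tail_prod R K x)"
      using tail_limit(2)[OF x] e'(1) by blast
    then have "near_one e' (tail_limit R x / tail_prod R (max K Nx) x)" by simp
    moreover have "near_one e' (tail_prod R (max K Nx) x / tail_prod R K x)" using N x K by simp
    ultimately have "near_one e' (tail_limit R x / tail_prod R (max K Nx) x * (tail_prod R (max K Nx) x / tail_prod R K x))"
      by (rule near_one_mult[OF e'(2)])
    then show ?thesis using tail_prod_nonzero[OF x] near_one_mono e' by simp
  qed
  then show ?thesis by blast
qed

lemma nonvanishing_tail_limit: "nonvanishing (tail_limit R)"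
  unfolding nonvanishingP_def using tail_limit(1) by blast

lemma cont_tail_limit: "cont (tail_limit R)"
  unfolding cont_iff_ratio[OF nonvanishing_tail_limit]
proof (intro ballI allI impI)
  fix x e assume x: "x \<in> Ob" and e: "(0::real) < e"
  define e' where "e' = min e 1"
  have e': "0 < e'" "e' \<le> 1" "e' \<le> e" unfolding e'_def using e by auto
  obtain K where K: "\<forall>x\<in>Ob. near_one e' (tail_limit R x / tail_prod R K x)"
    using tail_limit_uniform[OF e'(1)] by blast
  obtain N where N: "\<forall>x\<in>Ob. \<forall>y\<in>Ob. agree N x y \<longrightarrow> near_one e' (R x / R y)"
    using uniformly_cont_ratio[OF nv cont e'(1)] by blast
  have "near_one e (tail_limit R y / tail_limit R x)" if y: "y \<in> Ob" and "agree N y x" for y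
  proof -
    have "near_one e' (tail_prod R K y / tail_prod R K x)"
      unfolding tail_prod_def
      by (rule near_one_prod_agree[OF e'(1,2) N])
        (simp_all add: scaleP_agree \<open>agree N y x\<close> scaleP_Ob x y)
    moreover have "near_one e' (tail_prod R K x / tail_limit R x)"
      using near_one_inverse[OF e'(2)] K x by fastforce
    moreover have "near_one e' (tail_limit R y / tail_prod R K y)" using K y by blast
    ultimately have "near_one e' (tail_limit R y / tail_prod R K y
        * (tail_prod R K y / tail_prod R K x) * (tail_prod R K x / tail_limit R x))"
      using near_one_mult[OF e'(2)] by blast
    then show ?thesis using tail_prod_nonzero x y near_one_mono e' by simp
  qed
  then show "\<exists>N. \<forall>y\<in>Ob. agree N y x \<longrightarrow> near_one e (tail_limit R y / tail_limit R x)" by blast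
qed

text \<open>Comparing the periodic approximations of \<open>x\<close> and \<open>\<psi> x\<close> shows that the products of
  \<open>R (\<pi>^i x)\<close> over \<open>0 \<le> i \<le> K\<close> and of \<open>R (\<pi>^i \<psi> x)\<close> over \<open>1 \<le> i \<le> K\<close> become arbitrarily close.\<close>
lemma tail_limit_psiP:
  assumes x: "x \<in> Ob"
  shows "tail_limit R (psiP x) = R x * tail_limit R x"
proof -
  have "R x * tail_limit R x / tail_limit R (psiP x) = 1"
  proof (rule near_one_eq_1)
    fix e :: real assume e: "0 < e"
    define e' where "e' = min e 1"
    have e': "0 < e'" "e' \<le> 1" "e' \<le> e" unfolding e'_def using e by auto
    obtain N where N: "\<forall>x\<in>Ob. \<forall>y\<in>Ob. agree N x y \<longrightarrow> near_one e' (R x / R y)"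
      using uniformly_cont_ratio[OF nv cont e'(1)] by blast
    obtain K where K: "\<forall>x\<in>Ob. near_one e' (tail_limit R x / tail_prod R (max K N + 1) x)"
      using tail_limit_uniform[OF e'(1)] by (meson le_add1 max.cobounded1 order_trans)
    define K' where "K' = max K N + 1"
    have "near_one e' ((\<Prod>i<Suc K'. R (scaleP i x)) / (\<Prod>i<K'. R (scaleP (Suc i) (psiP x))))"
      using near_one_scaleP_prods[OF x one _ _ _ _ e'(1,2) N, of K' "N + 1"] unfolding K'_def by simp
    moreover have "(\<Prod>i<Suc K'. R (scaleP i x)) = R x * tail_prod R K' x"
      unfolding tail_prod_def prod.lessThan_Suc_shift using scaleP_0[OF x] by simp
    ultimately have "near_one e' (R x * tail_prod R K' x / tail_prod R K' (psiP x))"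
      unfolding tail_prod_def by simp
    moreover have "near_one e' (tail_limit R x / tail_prod R K' x)" using K x unfolding K'_def by blast
    moreover have "near_one e' (tail_prod R K' (psiP x) / tail_limit R (psiP x))"
      using near_one_inverse[OF e'(2)] K psiP_Ob[OF x] unfolding K'_def by fastforce
    ultimately have "near_one e' (R x * tail_prod R K' x / tail_prod R K' (psiP x)
        * (tail_limit R x / tail_prod R K' x) * (tail_prod R K' (psiP x) / tail_limit R (psiP x)))"
      using near_one_mult[OF e'(2)] by blast
    then show "near_one e (R x * tail_limit R x / tail_limit R (psiP x))"
      using tail_prod_nonzero[OF x] tail_prod_nonzero[OF psiP_Ob[OF x]] near_one_mono e' by simp
  qed
  then show ?thesis using tail_limit(1)[OF psiP_Ob[OF x]] by (simp add: field_simps)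
qed

end

text \<open>\<open>\<psi>\<close> maps each point of a periodic orbit to its predecessor, so the quotients telescope.\<close>
lemma prod_orbit_coboundary:
  assumes n: "1 \<le> n" and G: "nonvanishing G"
  shows "(\<Prod>j<n. G (orbit n az aa j) / G (psiP (orbit n az aa j))) = 1"
proof -
  have "psiP (orbit n az aa j) = orbit n az aa (j + (n - 1))" for j
    using psiP_orbit_Suc[OF n, where j = "j + (n - 1)"] orbit_period[where j = j] n by simp
  then have "(\<Prod>j<n. G (psiP (orbit n az aa j))) = (\<Prod>j<n. G (orbit n az aa (j + (n - 1))))"
    by (simp only:)
  also have "\<dots> = (\<Prod>j<n. G (orbit n az aa j))" by (rule prod_orbit_shift)
  finally have "(\<Prod>j<n. G (psiP (orbit n az aa j))) = (\<Prod>j<n. G (orbit n az aa j))" .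
  moreover have "(\<Prod>j<n. G (orbit n az aa j)) \<noteq> 0" using nonvanishingD[OF G orbit_Ob[OF n]] by simp
  ultimately show ?thesis by (simp add: prod_dividef)
qed

lemma orbit_prods_imp_coboundary:
  assumes Gam_nv: "nonvanishing Gam" and Gam_cont: "cont Gam"
    and H: "cont H" "nonvanishing H"
    and orbits: "\<forall>n\<ge>1. \<forall>az aa. admissible n az aa \<longrightarrow>
      (\<Prod>j<n. Gam (orbit n az aa j)) = (\<Prod>j<n. H (orbit n az aa j))"
  shows "\<exists>G. cont G \<and> nonvanishing G \<and> (\<forall>x\<in>Ob. H x = Gam x * G x / G (psiP x))"
proof -
  define R where "R x = H x / Gam x" for x
  have nv: "nonvanishing R" and cont: "cont R"
    using H Gam_nv Gam_cont unfolding R_def divide_inverse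
    by (auto intro!: nonvanishing_mult nonvanishing_inverse cont_mult cont_inverse)
  have "(\<Prod>j<n. R (orbit n az aa j)) = 1" if "1 \<le> n" "admissible n az aa" for n az aa
  proof -
    have "(\<Prod>j<n. H (orbit n az aa j)) = (\<Prod>j<n. Gam (orbit n az aa j))"
      using orbits that by simp
    moreover have "(\<Prod>j<n. Gam (orbit n az aa j)) \<noteq> 0"
      using nonvanishingD[OF Gam_nv orbit_Ob[OF \<open>1 \<le> n\<close>]] by simp
    ultimately show ?thesis by (simp add: R_def prod_dividef)
  qed
  then have one: "orbit_prod_one R" unfolding orbit_prod_one_def by blast
  define G where "G x = inverse (tail_limit R x)" for x
  have "H x = Gam x * G x / G (psiP x)" if "x \<in> Ob" for x
    using tail_limit_psiP[OF nv cont one that] tail_limit(1)[OF nv cont one that]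
      nonvanishingD[OF Gam_nv that]
    unfolding G_def R_def by (simp add: field_simps)
  moreover have "cont G" "nonvanishing G"
    unfolding G_def using nonvanishing_tail_limit[OF nv cont one] cont_tail_limit[OF nv cont one]
    by (simp_all add: cont_inverse nonvanishing_inverse)
  ultimately show ?thesis by blast
qed

lemma coboundary_imp_orbit_prods:
  assumes Gam_nv: "nonvanishing Gam" and Gam_cont: "cont Gam"
    and G: "cont G" "nonvanishing G" and H: "\<forall>x\<in>Ob. H x = Gam x * G x / G (psiP x)"
  shows "cont H \<and> nonvanishing H \<and> (\<forall>n\<ge>1. \<forall>az aa. admissible n az aa \<longrightarrow>
      (\<Prod>j<n. Gam (orbit n az aa j)) = (\<Prod>j<n. H (orbit n az aa j)))"
proof -
  define F where "F x = Gam x * (G x * inverse (G (psiP x)))" for x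
  have HF: "H x = F x" if "x \<in> Ob" for x using H that unfolding F_def by (simp add: divide_inverse)
  have "nonvanishing F" unfolding F_def using G Gam_nv
    by (intro nonvanishing_mult nonvanishing_inverse nonvanishing_psiP)
  moreover have "cont F" unfolding F_def using G Gam_nv Gam_cont
    by (intro cont_mult nonvanishing_mult nonvanishing_inverse nonvanishing_psiP cont_inverse cont_psiP)
  moreover have "(\<Prod>j<n. Gam (orbit n az aa j)) = (\<Prod>j<n. H (orbit n az aa j))" if n: "1 \<le> n" for n az aa
  proof -
    have "(\<Prod>j<n. H (orbit n az aa j))
        = (\<Prod>j<n. Gam (orbit n az aa j)) * (\<Prod>j<n. G (orbit n az aa j) / G (psiP (orbit n az aa j)))"
      using H orbit_Ob[OF n] by (simp add: prod.distrib[symmetric] times_divide_eq_right)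
    then show ?thesis using prod_orbit_coboundary[OF n G(2)] by simp
  qed
  moreover have "cont H \<longleftrightarrow> cont F" by (rule cont_cong) (rule HF)
  moreover have "nonvanishing H \<longleftrightarrow> nonvanishing F" by (rule nonvanishing_cong) (rule HF)
  ultimately show ?thesis by simp
qed

lemma coboundary_iff:
  assumes "nonvanishing Gam" "cont Gam"
  shows "(cont H \<and> nonvanishing H \<and> (\<forall>n\<ge>1. \<forall>az aa. admissible n az aa \<longrightarrow>
      (\<Prod>j<n. Gam (orbit n az aa j)) = (\<Prod>j<n. H (orbit n az aa j))))
    \<longleftrightarrow> (\<exists>G. cont G \<and> nonvanishing G \<and> (\<forall>x\<in>Ob. H x = Gam x * G x / G (psiP x)))"
  using orbit_prods_imp_coboundary[OF assms] coboundary_imp_orbit_prods[OF assms] by blast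

end

lemma prime_power_ge_2:
  fixes p :: int
  assumes "prime p" "1 \<le> e"
  shows "2 \<le> p ^ e"
proof -
  have "2 \<le> p" using assms(1) by (simp add: prime_ge_2_int)
  moreover have "p ^ 1 \<le> p ^ e" using calculation assms(2) by (intro power_increasing) auto
  ultimately show ?thesis by simp
qed

lemma degree_irreducible_power_ge_1:
  fixes v :: "'f::field poly"
  assumes "irreducible v" "1 \<le> e"
  shows "1 \<le> degree (v ^ e)"
proof -
  have "v \<noteq> 0" "\<not> is_unit v" using assms(1) irreducible_not_unit by auto
  then have "degree v \<noteq> 0" using is_unit_iff_degree by blast
  then show ?thesis using assms(2) \<open>v \<noteq> 0\<close> by (simp add: degree_power_eq)
qed

theorem mainTheorem1:
  fixes absv :: "'k::field \<Rightarrow> real"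
    and mZ mA :: nat
    and PZ :: "nat \<Rightarrow> int"
    and PA :: "nat \<Rightarrow> 'f::{field,finite} poly"
    and Gam H :: "'f obar \<Rightarrow> 'k"
  assumes K: "nonarch_complete_field absv"
    and PZ: "\<forall>t<mZ. \<exists>p e. prime p \<and> 1 \<le> e \<and> PZ t = p ^ e"
    and PA: "\<forall>t<mA. \<exists>v e. lead_coeff v = 1 \<and> irreducible v \<and> 1 \<le> e \<and> PA t = v ^ e"
    and Gam_cont: "contP mZ mA PZ PA absv Gam"
    and Gam_nz: "nonvanishingP mZ mA PZ PA Gam"
  shows "(contP mZ mA PZ PA absv H \<and> nonvanishingP mZ mA PZ PA H \<and>
           (\<forall>n\<ge>1. \<forall>az :: nat \<Rightarrow> int. \<forall>aa :: nat \<Rightarrow> 'f poly.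
              (\<forall>t<mZ. 0 \<le> az t \<and> az t < PZ t ^ n - 1) \<and>
              (\<forall>t<mA. degree (aa t) < degree (PA t ^ n - 1)) \<longrightarrow>
              (\<Prod>j<n. Gam (fracP mZ mA PZ PA n (\<lambda>t. PZ t ^ j * az t) (\<lambda>t. PA t ^ j * aa t)))
              = (\<Prod>j<n. H (fracP mZ mA PZ PA n (\<lambda>t. PZ t ^ j * az t) (\<lambda>t. PA t ^ j * aa t)))))
         \<longleftrightarrow>
         (\<exists>G :: 'f obar \<Rightarrow> 'k. contP mZ mA PZ PA absv G \<and> nonvanishingP mZ mA PZ PA G \<and>
            (\<forall>x\<in>ObarP mZ mA PZ PA.
               H x = Gam x * G x / G (negP mZ mA PZ PA (phiP mZ mA PZ PA (negP mZ mA PZ PA x)))))"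
proof -
  interpret obar_functions absv mZ mA PZ PA
  proof
    show "nonarch_complete_field absv" by (rule K)
    show "2 \<le> PZ t" if t: "t < mZ" for t
    proof -
      obtain p e where "prime p" "1 \<le> e" "PZ t = p ^ e" using PZ t by blast
      then show ?thesis using prime_power_ge_2 by simp
    qed
    show "1 \<le> degree (PA t)" if t: "t < mA" for t
    proof -
      obtain v e where "irreducible v" "1 \<le> e" "PA t = v ^ e" using PA t by blast
      then show ?thesis using degree_irreducible_power_ge_1 by simp
    qed
  qed
  show ?thesis
    using coboundary_iff[OF Gam_nz Gam_cont, of H] unfolding admissible_def psiP_def .
qed

end
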